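(* Let $(X,d)$ be a metric space, $\mu$ a non-atomic Borel measure on $X$, $m$ a Borel measure on $X$, $1\le p<\infty$, $\beta>0$, and let $\Gamma^*\subset\Gamma^\mu$ be a family of paths closed under taking non-trivial subpaths such that any two points of $X$ are joined by a path in $\Gamma^*$, and which has the $\mu$-arc-chord property with exponent $\beta$. If continuous functions are dense in $M^{\beta,p}$, then $M^{\beta,p}\hookrightarrow N^{1,p}$: there is $C>0$ such that every $f\in M^{\beta,p}$ has an $m$-a.e. representative in $\tilde N^{1,p}$ with $\|f\|_{N^{1,p}}\le C\|f\|_{M^{\beta,p}}$.
   Context: A path is a continuous map $\gamma:[a,b]\to X$; a subpath is a restriction to a subinterval, trivial if that interval is a point; $\mathrm{Im}(\gamma)=\gamma([a,b])$. $\mu$ non-atomic: $\mu(\{x\})=0$ for all $x$. $\Gamma^\mu$ is the set of all non-trivial injective paths $\gamma$ with $0<\mu(\mathrm{Im}(\tilde\gamma))<\infty$ for every non-trivial subpath $\tilde\gamma$. For Borel $g\ge0$, $\int_\gamma g:=\int_{\mathrm{Im}(\gamma)}g\,d\mu$. $\mu$-arc-chord property with exponent $\beta$: there is $C_\mu>0$ with $\mathrm{diam}(\mathrm{Im}(\gamma))^\beta\le C_\mu\,\mu(\mathrm{Im}(\gamma))$ for all $\gamma\in\Gamma^*$. For $\Gamma\subset\Gamma^*$, $\mathrm{Mod}_p(\Gamma)=\inf\int_Xg^p\,dm$ over Borel $g\ge0$ with $\int_\gamma g\ge1$ on $\Gamma$. A Borel $\rho\ge0$ is a $p$-weak upper gradient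 of $f$ if $|f(x)-f(y)|\le\int_\gamma\rho$ for all $\gamma\in\Gamma^*$ (endpoints $x,y$) outside a family of $p$-modulus zero. $\tilde N^{1,p}$: $f\in L^p(m)$ with a $p$-weak upper gradient in $L^p(m)$; $\|f\|_{N^{1,p}}=\|f\|_{L^p(m)}+\inf_\rho\|\rho\|_{L^p(m)}$; $N^{1,p}=\tilde N^{1,p}/\!\sim$ with $f\sim g\iff\|f-g\|_{N^{1,p}}=0$. $M^{\beta,p}$: the set of $f\in L^p(m)$ (modulo $m$-a.e. equality) for which there exist $g\in L^p(m)$, $g\ge0$, and $E$ with $m(E)=0$ such that $|f(x)-f(y)|\le d(x,y)^\beta(g(x)+g(y))$ for all $x,y\in X\setminus E$; $\|f\|_{M^{\beta,p}}=\|f\|_{L^p(m)}+\inf_g\|g\|_{L^p(m)}$. *)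

theory Defs
  imports "HOL-Analysis.Analysis"
begin

definition enn_powr :: "ennreal \<Rightarrow> real \<Rightarrow> ennreal" where
  "enn_powr x q = (if x = \<infinity> then \<infinity> else ennreal (enn2real x powr q))"

definition lp_enorm :: "'a measure \<Rightarrow> real \<Rightarrow> ('a \<Rightarrow> ennreal) \<Rightarrow> ennreal" where
  "lp_enorm m p g = enn_powr (\<integral>\<^sup>+ x. enn_powr (g x) p \<partial>m) (1 / p)"

definition in_Lp :: "'a measure \<Rightarrow> real \<Rightarrow> ('a \<Rightarrow> real) \<Rightarrow> bool" where
  "in_Lp m p f \<longleftrightarrow> f \<in> borel_measurable m \<and> lp_enorm m p (\<lambda>x. ennreal \<bar>f x\<bar>) < \<infinity>"

text \<open>A path \<gamma> : [a,b] \<rightarrow> X is represented by the triple (a, b, \<gamma>); only the values on [a,b] matter.\<close>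
type_synonym 'a rpath = "real \<times> real \<times> (real \<Rightarrow> 'a)"

definition pimage :: "'a rpath \<Rightarrow> 'a set" where
  "pimage P = (case P of (a, b, \<gamma>) \<Rightarrow> \<gamma> ` {a..b})"

definition Gamma_mu :: "'a::topological_space measure \<Rightarrow> 'a rpath set" where
  "Gamma_mu \<mu> = {(a, b, \<gamma>). a < b \<and> continuous_on {a..b} \<gamma> \<and> inj_on \<gamma> {a..b} \<and>
      (\<forall>c d. a \<le> c \<and> c < d \<and> d \<le> b \<longrightarrow>
         0 < emeasure \<mu> (\<gamma> ` {c..d}) \<and> emeasure \<mu> (\<gamma> ` {c..d}) < \<infinity>)}"

definition subpath_closed :: "'a rpath set \<Rightarrow> bool" where
  "subpath_closed \<Gamma> \<longleftrightarrow> (\<forall>a b \<gamma> c d. (a, b, \<gamma>) \<in> \<Gamma> \<and> a \<le> c \<and> c < d \<and> d \<le> b \<longrightarrow> (c, d, \<gamma>) \<in> \<Gamma>)"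

definition joins_points :: "'a rpath set \<Rightarrow> bool" where
  "joins_points \<Gamma> \<longleftrightarrow> (\<forall>x y. x \<noteq> y \<longrightarrow> (\<exists>a b \<gamma>. (a, b, \<gamma>) \<in> \<Gamma> \<and> \<gamma> a = x \<and> \<gamma> b = y))"

definition path_int :: "'a measure \<Rightarrow> 'a rpath \<Rightarrow> ('a \<Rightarrow> ennreal) \<Rightarrow> ennreal" where
  "path_int \<mu> P g = (\<integral>\<^sup>+ x \<in> pimage P. g x \<partial>\<mu>)"

definition arc_chord :: "'a::metric_space measure \<Rightarrow> real \<Rightarrow> 'a rpath set \<Rightarrow> bool" where
  "arc_chord \<mu> \<beta> \<Gamma> \<longleftrightarrow> (\<exists>C>0. \<forall>P\<in>\<Gamma>.
      ennreal (diameter (pimage P) powr \<beta>) \<le> ennreal C * emeasure \<mu> (pimage P))"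

definition Mod :: "'a::topological_space measure \<Rightarrow> 'a measure \<Rightarrow> real \<Rightarrow> 'a rpath set \<Rightarrow> ennreal" where
  "Mod \<mu> m p \<Gamma> = (INF g \<in> {g. g \<in> borel_measurable borel \<and> (\<forall>P\<in>\<Gamma>. 1 \<le> path_int \<mu> P g)}.
      \<integral>\<^sup>+ x. enn_powr (g x) p \<partial>m)"

definition weak_upper_gradient ::
  "'a::topological_space rpath set \<Rightarrow> 'a measure \<Rightarrow> 'a measure \<Rightarrow> real \<Rightarrow> ('a \<Rightarrow> real) \<Rightarrow> ('a \<Rightarrow> ennreal) \<Rightarrow> bool" where
  "weak_upper_gradient \<Gamma>s \<mu> m p f \<rho> \<longleftrightarrow> \<rho> \<in> borel_measurable borel \<and>
     (\<exists>\<Gamma>0 \<subseteq> \<Gamma>s. Mod \<mu> m p \<Gamma>0 = 0 \<and>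
        (\<forall>a b \<gamma>. (a, b, \<gamma>) \<in> \<Gamma>s - \<Gamma>0 \<longrightarrow> ennreal \<bar>f (\<gamma> a) - f (\<gamma> b)\<bar> \<le> path_int \<mu> (a, b, \<gamma>) \<rho>))"

definition Ntilde :: "'a::topological_space rpath set \<Rightarrow> 'a measure \<Rightarrow> 'a measure \<Rightarrow> real \<Rightarrow> ('a \<Rightarrow> real) set" where
  "Ntilde \<Gamma>s \<mu> m p = {f. in_Lp m p f \<and>
      (\<exists>\<rho>. weak_upper_gradient \<Gamma>s \<mu> m p f \<rho> \<and> lp_enorm m p \<rho> < \<infinity>)}"

definition N_norm :: "'a::topological_space rpath set \<Rightarrow> 'a measure \<Rightarrow> 'a measure \<Rightarrow> real \<Rightarrow> ('a \<Rightarrow> real) \<Rightarrow> ennreal" where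
  "N_norm \<Gamma>s \<mu> m p f = lp_enorm m p (\<lambda>x. ennreal \<bar>f x\<bar>) +
      (INF \<rho> \<in> {\<rho>. weak_upper_gradient \<Gamma>s \<mu> m p f \<rho>}. lp_enorm m p \<rho>)"

definition hajlasz_gradient ::
  "'a::metric_space measure \<Rightarrow> real \<Rightarrow> real \<Rightarrow> ('a \<Rightarrow> real) \<Rightarrow> ('a \<Rightarrow> real) \<Rightarrow> bool" where
  "hajlasz_gradient m \<beta> p f g \<longleftrightarrow> in_Lp m p g \<and> (\<forall>x. 0 \<le> g x) \<and>
     (\<exists>E \<in> sets m. emeasure m E = 0 \<and>
        (\<forall>x y. x \<notin> E \<and> y \<notin> E \<longrightarrow> \<bar>f x - f y\<bar> \<le> dist x y powr \<beta> * (g x + g y)))"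

definition Hajlasz :: "'a::metric_space measure \<Rightarrow> real \<Rightarrow> real \<Rightarrow> ('a \<Rightarrow> real) set" where
  "Hajlasz m \<beta> p = {f. in_Lp m p f \<and> (\<exists>g. hajlasz_gradient m \<beta> p f g)}"

definition M_norm :: "'a::metric_space measure \<Rightarrow> real \<Rightarrow> real \<Rightarrow> ('a \<Rightarrow> real) \<Rightarrow> ennreal" where
  "M_norm m \<beta> p f = lp_enorm m p (\<lambda>x. ennreal \<bar>f x\<bar>) +
      (INF g \<in> {g. hajlasz_gradient m \<beta> p f g}. lp_enorm m p (\<lambda>x. ennreal (g x)))"

definition continuous_dense_in_Hajlasz :: "'a::metric_space measure \<Rightarrow> real \<Rightarrow> real \<Rightarrow> bool" where
  "continuous_dense_in_Hajlasz m \<beta> p \<longleftrightarrow>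
     (\<forall>f \<in> Hajlasz m \<beta> p. \<forall>\<epsilon>>0. \<exists>u. continuous_on UNIV u \<and> u \<in> Hajlasz m \<beta> p \<and>
        M_norm m \<beta> p (\<lambda>x. f x - u x) < ennreal \<epsilon>)"

end

theory Submission
  imports Defs
begin

text \<open>For a continuous \<open>u\<close> with Hajlasz gradient \<open>w\<close> the increment of \<open>u\<close> along a path \<open>\<gamma>\<close>
  is controlled by \<open>\<integral>\<^sub>\<gamma> w d\<mu>\<close>: cut \<open>\<gamma>\<close> at the points where the \<open>\<mu>\<close>-measure of the initial arc is
  a dyadic fraction of the total, pick in each piece a point where \<open>w\<close> is at most its average, and
  chain the Hajlasz inequality between consecutive points.  The arc-chord property turns
  \<open>d(x,y)\<^sup>\<beta>\<close> into the \<open>\<mu>\<close>-measure of a piece, so the chain sums to \<open>9 C \<integral>\<^sub>\<gamma> w\<close>.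

  A general \<open>f \<in> M\<^sup>\<beta>\<^sup>,\<^sup>p\<close> with gradient \<open>g\<close> is approximated by continuous \<open>u\<^sub>n\<close> with summably
  small \<open>M\<^sup>\<beta>\<^sup>,\<^sup>p\<close>-distance to \<open>f\<close>, realised by gradients \<open>h\<^sub>n\<close> of \<open>f - u\<^sub>n\<close>; then
  \<open>(n+1) h\<^sub>n\<close> and \<open>(n+1) |f - u\<^sub>n|\<close> have a common majorant \<open>G \<in> L\<^sup>p\<close>.  Outside a path family of
  \<open>p\<close>-modulus zero the \<open>u\<^sub>n\<close> converge uniformly along each path, the limit agrees with \<open>f\<close>
  almost everywhere, and \<open>9 C (g + G)\<close> is a \<open>p\<close>-weak upper gradient of it with
  \<open>L\<^sup>p\<close>-norm at most a constant times the \<open>M\<^sup>\<beta>\<^sup>,\<^sup>p\<close>-norm of \<open>f\<close>.\<close>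

lemma enn_powr_ennreal: "0 \<le> x \<Longrightarrow> enn_powr (ennreal x) q = ennreal (x powr q)"
  by (simp add: enn_powr_def)

lemma enn_powr_top [simp]: "enn_powr top q = top"
  by (simp add: enn_powr_def)

lemma enn_powr_zero: "0 < q \<Longrightarrow> enn_powr 0 q = 0"
  by (simp add: enn_powr_def)

lemma enn_powr_mono:
  assumes "0 \<le> q" "x \<le> y"
  shows "enn_powr x q \<le> enn_powr y q"
proof (cases y)
  case (real s)
  with assms(2) obtain r where "0 \<le> r" "x = ennreal r" "r \<le> s"
    by (cases x) (auto simp: top_unique)
  then show ?thesis
    using real assms(1) by (simp add: enn_powr_ennreal powr_mono2)
qed simp

lemma enn_powr_powr_inverse: "0 < p \<Longrightarrow> enn_powr (enn_powr x (1 / p)) p = x"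
  by (cases x) (simp_all add: enn_powr_ennreal powr_powr)

lemma enn_powr_inverse_powr: "0 < p \<Longrightarrow> enn_powr (enn_powr x p) (1 / p) = x"
  by (cases x) (simp_all add: enn_powr_ennreal powr_powr)

lemma enn_powr_mult_ennreal:
  assumes "0 \<le> c" "0 < q"
  shows "enn_powr (ennreal c * x) q = ennreal (c powr q) * enn_powr x q"
proof (cases x)
  case (real r)
  then show ?thesis
    using assms by (simp add: enn_powr_ennreal powr_mult ennreal_mult[symmetric])
next
  case top
  then show ?thesis
    using assms by (cases "c = 0") (simp_all add: enn_powr_zero ennreal_mult_top)
qed

lemma enn_powr_measurable [measurable]:
  assumes "f \<in> borel_measurable M"
  shows "(\<lambda>x. enn_powr (f x) q) \<in> borel_measurable M"
proof -
  have "enn_powr x q = (if x = top then top else ennreal (enn2real x powr q))" for x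
    by (simp add: enn_powr_def)
  then show ?thesis
    using assms by simp
qed

lemma enn_powr_max_le: "0 \<le> p \<Longrightarrow> enn_powr (max x y) p \<le> enn_powr x p + enn_powr y p"
  by (cases "x \<le> y") (auto simp: max_def add_increasing)

lemma enn_powr_add_le:
  assumes "1 \<le> p"
  shows "enn_powr (x + y) p \<le> ennreal (2 powr p) * (enn_powr x p + enn_powr y p)"
proof -
  have "enn_powr (x + y) p \<le> enn_powr (ennreal 2 * max x y) p"
    using assms by (intro enn_powr_mono) (auto simp: mult_2 add_mono)
  also have "\<dots> = ennreal (2 powr p) * enn_powr (max x y) p"
    using assms by (intro enn_powr_mult_ennreal) auto
  also have "\<dots> \<le> ennreal (2 powr p) * (enn_powr x p + enn_powr y p)"
    using assms by (intro mult_left_mono enn_powr_max_le) auto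
  finally show ?thesis .
qed

lemma enn_powr_lp_enorm: "0 < p \<Longrightarrow> enn_powr (lp_enorm m p f) p = (\<integral>\<^sup>+x. enn_powr (f x) p \<partial>m)"
  unfolding lp_enorm_def by (rule enn_powr_powr_inverse)

lemma lp_enorm_le_ennreal:
  assumes "0 < p" "0 \<le> B" "(\<integral>\<^sup>+x. enn_powr (f x) p \<partial>m) \<le> ennreal (B powr p)"
  shows "lp_enorm m p f \<le> ennreal B"
proof -
  have "lp_enorm m p f \<le> enn_powr (ennreal (B powr p)) (1 / p)"
    unfolding lp_enorm_def using assms by (intro enn_powr_mono) auto
  also have "\<dots> = ennreal B"
    using assms by (simp add: enn_powr_ennreal powr_powr)
  finally show ?thesis .
qed

lemma nn_integral_enn_powr_le_if_lp_enorm_le: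
  assumes "0 < p" "0 \<le> B" "lp_enorm m p f \<le> ennreal B"
  shows "(\<integral>\<^sup>+x. enn_powr (f x) p \<partial>m) \<le> ennreal (B powr p)"
proof -
  have "enn_powr (lp_enorm m p f) p \<le> enn_powr (ennreal B) p"
    using assms by (intro enn_powr_mono) auto
  then show ?thesis
    using assms by (simp add: enn_powr_lp_enorm enn_powr_ennreal)
qed

lemma lp_enorm_cong_AE:
  assumes "AE x in m. f x = g x"
  shows "lp_enorm m p f = lp_enorm m p g"
proof -
  have "AE x in m. enn_powr (f x) p = enn_powr (g x) p"
    using assms by eventually_elim simp
  then show ?thesis
    unfolding lp_enorm_def by (simp cong: nn_integral_cong_AE)
qed

lemma lp_enorm_zero: "0 < p \<Longrightarrow> lp_enorm m p (\<lambda>x. 0) = 0"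
  unfolding lp_enorm_def by (simp add: enn_powr_zero)

lemma two_times_powr_le: "1 \<le> p \<Longrightarrow> 0 \<le> (x::real) \<Longrightarrow> 2 * x powr p \<le> (2 * x) powr p"
  using powr_mono[of 1 p 2] by (simp add: powr_mult mult_right_mono)

lemma powr_divide_power_le: "1 \<le> p \<Longrightarrow> 0 \<le> (x::real) \<Longrightarrow> (x / 2 ^ k) powr p \<le> x powr p / 2 ^ k"
proof -
  assume p: "1 \<le> p" and x: "0 \<le> x"
  have "(2::real) ^ k \<le> (2 ^ k) powr p"
    using powr_mono[OF p, of "2 ^ k"] by simp
  then show ?thesis
    using x by (simp add: powr_divide divide_left_mono)
qed

lemma nn_integral_enn_powr_cmult_add_le:
  assumes p: "1 \<le> p" and c: "0 \<le> c" and A: "0 \<le> A"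
    and f: "f \<in> borel_measurable M" "(\<integral>\<^sup>+x. enn_powr (f x) p \<partial>M) \<le> ennreal (A powr p)"
    and g: "g \<in> borel_measurable M" "(\<integral>\<^sup>+x. enn_powr (g x) p \<partial>M) \<le> ennreal (A powr p)"
  shows "(\<integral>\<^sup>+x. enn_powr (ennreal c * (f x + g x)) p \<partial>M) \<le> ennreal ((4 * c * A) powr p)"
proof -
  have "(\<integral>\<^sup>+x. enn_powr (ennreal c * (f x + g x)) p \<partial>M) =
      (\<integral>\<^sup>+x. ennreal (c powr p) * enn_powr (f x + g x) p \<partial>M)"
    using p c by (simp add: enn_powr_mult_ennreal)
  also have "\<dots> \<le>
      (\<integral>\<^sup>+x. ennreal (c powr p) * (ennreal (2 powr p) * (enn_powr (f x) p + enn_powr (g x) p)) \<partial>M)"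
    using p by (intro nn_integral_mono mult_left_mono enn_powr_add_le) auto
  also have "\<dots> = ennreal (c powr p) * (ennreal (2 powr p) *
      ((\<integral>\<^sup>+x. enn_powr (f x) p \<partial>M) + (\<integral>\<^sup>+x. enn_powr (g x) p \<partial>M)))"
    using f g by (simp add: nn_integral_cmult nn_integral_add)
  also have "\<dots> \<le> ennreal (c powr p) * (ennreal (2 powr p) * (ennreal (A powr p) + ennreal (A powr p)))"
    using f g by (intro mult_left_mono add_mono) auto
  also have "\<dots> = ennreal (c powr p * 2 powr p * (2 * A powr p))"
    by (simp add: ennreal_mult ennreal_plus[symmetric] mult.assoc)
  also have "\<dots> \<le> ennreal ((4 * c * A) powr p)"
  proof (rule ennreal_leI)
    have "c powr p * 2 powr p * (2 * A powr p) \<le> c powr p * 2 powr p * (2 * A) powr p"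
      using two_times_powr_le[OF p A] by (intro mult_left_mono) auto
    also have "\<dots> = (4 * c * A) powr p"
      using c A by (simp add: powr_mult[symmetric] mult_ac)
    finally show "c powr p * 2 powr p * (2 * A powr p) \<le> (4 * c * A) powr p" .
  qed
  finally show ?thesis .
qed

lemma nn_integral_enn_powr_scaled_max_le:
  assumes p: "1 \<le> p" and c: "0 \<le> c" and \<epsilon>: "0 \<le> \<epsilon>"
    and a: "a \<in> borel_measurable M" "\<And>x. 0 \<le> a x" "lp_enorm M p (\<lambda>x. ennreal (a x)) \<le> ennreal \<epsilon>"
    and b: "b \<in> borel_measurable M" "\<And>x. 0 \<le> b x" "lp_enorm M p (\<lambda>x. ennreal (b x)) \<le> ennreal \<epsilon>"
  shows "(\<integral>\<^sup>+x. enn_powr (ennreal (c * max (a x) (b x))) p \<partial>M) \<le> ennreal (2 * (c * \<epsilon>) powr p)"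
proof -
  have "enn_powr (ennreal (c * max (a x) (b x))) p =
      ennreal (c powr p) * enn_powr (max (ennreal (a x)) (ennreal (b x))) p" for x
    using p c a(2)[of x] b(2)[of x] by (simp add: ennreal_mult enn_powr_mult_ennreal max_def)
  then have "(\<integral>\<^sup>+x. enn_powr (ennreal (c * max (a x) (b x))) p \<partial>M) \<le>
      (\<integral>\<^sup>+x. ennreal (c powr p) * (enn_powr (ennreal (a x)) p + enn_powr (ennreal (b x)) p) \<partial>M)"
    using p by (auto intro!: nn_integral_mono mult_left_mono enn_powr_max_le)
  also have "\<dots> = ennreal (c powr p) *
      ((\<integral>\<^sup>+x. enn_powr (ennreal (a x)) p \<partial>M) + (\<integral>\<^sup>+x. enn_powr (ennreal (b x)) p \<partial>M))"
    using a b by (simp add: nn_integral_cmult nn_integral_add)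
  also have "\<dots> \<le> ennreal (c powr p) * (ennreal (\<epsilon> powr p) + ennreal (\<epsilon> powr p))"
    using a b p \<epsilon> by (intro mult_left_mono add_mono nn_integral_enn_powr_le_if_lp_enorm_le) auto
  also have "\<dots> = ennreal (2 * (c * \<epsilon>) powr p)"
    using c \<epsilon> by (simp add: ennreal_mult[symmetric] ennreal_plus[symmetric] powr_mult)
  finally show ?thesis .
qed

lemma lp_majorant_of_summable:
  assumes p: "0 < p" and \<phi>: "\<And>n. \<phi> n \<in> borel_measurable M"
    and b: "\<And>n. (\<integral>\<^sup>+x. enn_powr (\<phi> n x) p \<partial>M) \<le> ennreal (b n)" "\<And>n. 0 \<le> b n" "b sums B"
  obtains G where "G \<in> borel_measurable M" "(\<integral>\<^sup>+x. enn_powr (G x) p \<partial>M) \<le> ennreal B"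
    "\<And>n x. \<phi> n x \<le> G x"
proof
  define S where "S x = (\<Sum>n. enn_powr (\<phi> n x) p)" for x
  show "(\<lambda>x. enn_powr (S x) (1 / p)) \<in> borel_measurable M"
    unfolding S_def using \<phi> by measurable
  have "(\<integral>\<^sup>+x. enn_powr (enn_powr (S x) (1 / p)) p \<partial>M) = (\<integral>\<^sup>+x. S x \<partial>M)"
    by (simp add: enn_powr_powr_inverse p)
  also have "\<dots> = (\<Sum>n. \<integral>\<^sup>+x. enn_powr (\<phi> n x) p \<partial>M)"
    unfolding S_def using \<phi> by (intro nn_integral_suminf) measurable
  also have "\<dots> \<le> (\<Sum>n. ennreal (b n))"
    by (intro suminf_le summableI b)
  also have "\<dots> = ennreal B"
    using b by (simp add: suminf_ennreal2 sums_summable sums_unique[symmetric])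
  finally show "(\<integral>\<^sup>+x. enn_powr (enn_powr (S x) (1 / p)) p \<partial>M) \<le> ennreal B" .
  fix n x
  have "\<phi> n x = enn_powr (enn_powr (\<phi> n x) p) (1 / p)"
    by (simp add: enn_powr_inverse_powr p)
  also have "\<dots> \<le> enn_powr (S x) (1 / p)"
    unfolding S_def using p sum_le_suminf[OF summableI, of "{n}" "\<lambda>n. enn_powr (\<phi> n x) p"]
    by (intro enn_powr_mono) auto
  finally show "\<phi> n x \<le> enn_powr (S x) (1 / p)" .
qed

lemma ennreal_le_of_tendsto:
  assumes "X \<longlonglongrightarrow> L" "\<And>n. ennreal (X n) \<le> B"
  shows "ennreal L \<le> B"
  using assms by (intro LIMSEQ_le_const2[of "\<lambda>n. ennreal (X n)"]) auto

lemma LIMSEQ_if_Suc_times_dist_le: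
  fixes X :: "nat \<Rightarrow> real"
  assumes "\<And>n. real (Suc n) * \<bar>X n - x\<bar> \<le> B"
  shows "X \<longlonglongrightarrow> x"
proof -
  have "norm (X n - x) \<le> B * inverse (real (Suc n))" for n
    using assms[of n] by (simp add: field_simps del: of_nat_Suc)
  then have "eventually (\<lambda>n. norm (X n - x) \<le> B * inverse (real (Suc n))) sequentially"
    by (intro always_eventually allI)
  moreover have "(\<lambda>n. B * inverse (real (Suc n))) \<longlonglongrightarrow> 0"
    using tendsto_mult_right_zero[OF LIMSEQ_inverse_real_of_nat] by simp
  ultimately have "(\<lambda>n. X n - x) \<longlonglongrightarrow> 0"
    by (rule Lim_null_comparison)
  then show ?thesis
    by (rule LIM_zero_cancel)
qed

lemma convergent_if_increments_Cauchy:
  fixes x y :: "nat \<Rightarrow> real"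
  assumes x: "convergent x"
    and bound: "\<And>n k. \<bar>(y n - x n) - (y k - x k)\<bar> \<le> B / Suc n + B / Suc k"
  shows "convergent y"
proof -
  have "Cauchy (\<lambda>n. y n - x n)"
  proof (rule CauchyI)
    fix e :: real
    assume e: "0 < e"
    define K where "K = 2 * \<bar>B\<bar> + 1"
    have K: "0 < K"
      by (simp add: K_def add_nonneg_pos)
    obtain N where N: "1 / Suc N < e / K"
      by (rule nat_approx_posE[of "e / K"]) (use e K in auto)
    have small: "B / Suc n \<le> \<bar>B\<bar> / Suc N" if "N \<le> n" for n
    proof -
      have "B / Suc n \<le> \<bar>B\<bar> / Suc n"
        by (simp add: divide_right_mono)
      also have "\<dots> \<le> \<bar>B\<bar> / Suc N"
        using that by (simp add: frac_le)
      finally show ?thesis .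
    qed
    have twice: "\<bar>B\<bar> / Suc N + \<bar>B\<bar> / Suc N \<le> K * (1 / Suc N)"
      unfolding K_def by (simp add: divide_right_mono flip: add_divide_distrib)
    show "\<exists>M. \<forall>m\<ge>M. \<forall>n\<ge>M. norm ((y m - x m) - (y n - x n)) < e"
    proof (intro exI allI impI)
      fix m n
      assume "N \<le> m" "N \<le> n"
      then have "norm ((y m - x m) - (y n - x n)) \<le> K * (1 / Suc N)"
        using bound[of m n] small[of m] small[of n] twice by simp
      also have "\<dots> < K * (e / K)"
        using N K by (intro mult_strict_left_mono)
      finally show "norm ((y m - x m) - (y n - x n)) < e"
        using K by simp
    qed
  qed
  then have "convergent (\<lambda>n. (y n - x n) + x n)"
    using x by (intro convergent_add) (simp_all add: Cauchy_convergent_iff)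
  then show ?thesis
    by simp
qed

lemma nn_integral_indicator_less:
  assumes A: "A \<in> sets M" "emeasure M A \<noteq> 0" and N: "N \<in> null_sets M"
    and w: "w \<in> borel_measurable M" and c: "0 \<le> c" and above: "\<And>x. x \<in> A - N \<Longrightarrow> c < w x"
    and finite: "(\<integral>\<^sup>+x. ennreal c * indicator A x \<partial>M) \<noteq> \<infinity>"
  shows "(\<integral>\<^sup>+x. ennreal c * indicator A x \<partial>M) < (\<integral>\<^sup>+x\<in>A. ennreal (w x) \<partial>M)"
proof (rule nn_integral_less)
  show "AE x in M. ennreal c * indicator A x \<le> ennreal (w x) * indicator A x"
    using AE_not_in[OF N]
  proof eventually_elim
    case (elim x)
    then show ?case
      using above[of x] by (cases "x \<in> A") (auto intro: ennreal_leI)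
  qed
  show "\<not> (AE x in M. ennreal (w x) * indicator A x \<le> ennreal c * indicator A x)"
  proof
    assume "AE x in M. ennreal (w x) * indicator A x \<le> ennreal c * indicator A x"
    then have "AE x in M. x \<notin> A - N"
    proof eventually_elim
      case (elim x)
      show ?case
      proof
        assume x: "x \<in> A - N"
        with elim c have "w x \<le> c"
          by (simp add: ennreal_le_iff)
        with above[OF x] show False
          by simp
      qed
    qed
    moreover have "{x \<in> space M. \<not> x \<notin> A - N} = A - N"
      using sets.sets_into_space[OF A(1)] by auto
    ultimately have "emeasure M (A - N) = 0"
      using A(1) N by (subst (asm) AE_iff_measurable[OF _ refl]) auto
    with A emeasure_Diff_null_set[OF N A(1)] show False
      by simp
  qed
qed (use A(1) w finite in auto)

lemma exists_le_average:
  assumes A: "A \<in> sets M" "0 < emeasure M A" "emeasure M A < \<infinity>"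
    and N: "N \<in> null_sets M" and w: "w \<in> borel_measurable M" "\<And>x. 0 \<le> w x"
  shows "\<exists>x\<in>A - N. ennreal (w x * measure M A) \<le> (\<integral>\<^sup>+x\<in>A. ennreal (w x) \<partial>M)"
proof (rule ccontr)
  assume "\<not> ?thesis"
  then have above: "(\<integral>\<^sup>+x\<in>A. ennreal (w x) \<partial>M) < ennreal (w x * measure M A)" if "x \<in> A - N" for x
    using that by (simp add: not_le)
  have "A - N \<noteq> {}"
    using A(2) emeasure_Diff_null_set[OF N A(1)] by (metis emeasure_empty less_irrefl)
  then obtain j where j: "0 \<le> j" "(\<integral>\<^sup>+x\<in>A. ennreal (w x) \<partial>M) = ennreal j"
    using above by (cases "\<integral>\<^sup>+x\<in>A. ennreal (w x) \<partial>M") auto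
  define \<nu> where "\<nu> = measure M A"
  have \<nu>: "0 < \<nu>" "emeasure M A = ennreal \<nu>"
    using A emeasure_eq_ennreal_measure[of M A]
    by (auto simp: \<nu>_def measure_def enn2real_positive_iff less_top)
  have "(\<integral>\<^sup>+x. ennreal (j / \<nu>) * indicator A x \<partial>M) = ennreal j"
    using \<nu> j A(1) by (simp add: nn_integral_cmult_indicator ennreal_mult[symmetric])
  moreover have "j / \<nu> < w x" if "x \<in> A - N" for x
    using above[OF that] \<nu>(1) j by (simp add: \<nu>_def divide_less_eq ennreal_less_iff)
  ultimately have "ennreal j < (\<integral>\<^sup>+x\<in>A. ennreal (w x) \<partial>M)"
    using nn_integral_indicator_less[of A M N w "j / \<nu>"] A N w j \<nu> by auto
  with j show False
    by simp
qed

section \<open>Paths with the arc-chord property\<close>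

locale arc_chord_path =
  fixes \<mu> :: "'a::metric_space measure" and \<beta> C a b :: real and \<gamma> :: "real \<Rightarrow> 'a"
  assumes sets_mu: "sets \<mu> = sets borel" and emeasure_singleton: "\<And>x. emeasure \<mu> {x} = 0"
    and a_less_b: "a < b" and continuous: "continuous_on {a..b} \<gamma>" and inj: "inj_on \<gamma> {a..b}"
    and emeasure_image_pos: "\<And>s t. a \<le> s \<Longrightarrow> s < t \<Longrightarrow> t \<le> b \<Longrightarrow> 0 < emeasure \<mu> (\<gamma> ` {s..t})"
    and emeasure_image_less: "\<And>s t. a \<le> s \<Longrightarrow> s < t \<Longrightarrow> t \<le> b \<Longrightarrow> emeasure \<mu> (\<gamma> ` {s..t}) < \<infinity>"
    and arc_chord: "\<And>s t. a \<le> s \<Longrightarrow> s < t \<Longrightarrow> t \<le> b \<Longrightarrow>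
      diameter (\<gamma> ` {s..t}) powr \<beta> \<le> C * measure \<mu> (\<gamma> ` {s..t})"
    and beta_pos: "0 < \<beta>" and C_pos: "0 < C"
begin

lemma measurable_mu_eq [simp]: "measurable \<mu> N = measurable borel N"
  by (rule measurable_cong_sets[OF sets_mu refl])

lemma compact_image: "a \<le> s \<Longrightarrow> t \<le> b \<Longrightarrow> compact (\<gamma> ` {s..t})"
  by (rule compact_continuous_image) (auto intro: continuous_on_subset[OF continuous])

lemma image_in_sets: "a \<le> s \<Longrightarrow> t \<le> b \<Longrightarrow> \<gamma> ` {s..t} \<in> sets \<mu>"
  unfolding sets_mu by (intro borel_closed compact_imp_closed compact_image)

lemma singleton_null: "{x} \<in> null_sets \<mu>"
  using emeasure_singleton[of x] by (auto simp: null_sets_def sets_mu)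

lemma emeasure_image_finite: "a \<le> s \<Longrightarrow> t \<le> b \<Longrightarrow> emeasure \<mu> (\<gamma> ` {s..t}) < \<infinity>"
proof (cases "s < t")
  case False
  then have "\<gamma> ` {s..t} = {} \<or> \<gamma> ` {s..t} = {\<gamma> s}"
    by (cases "s = t") auto
  then show ?thesis
    using emeasure_singleton by auto
qed (use emeasure_image_less in auto)

lemma emeasure_image_eq: "a \<le> s \<Longrightarrow> t \<le> b \<Longrightarrow> emeasure \<mu> (\<gamma> ` {s..t}) = ennreal (measure \<mu> (\<gamma> ` {s..t}))"
  using emeasure_image_finite[of s t] emeasure_eq_ennreal_measure[of \<mu> "\<gamma> ` {s..t}"] by fastforce

lemma image_fmeasurable: "a \<le> s \<Longrightarrow> t \<le> b \<Longrightarrow> \<gamma> ` {s..t} \<in> fmeasurable \<mu>"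
  using emeasure_image_finite image_in_sets by (auto simp: fmeasurable_def)

lemma measure_singleton: "measure \<mu> {x} = 0"
  using emeasure_singleton[of x] by (simp add: measure_def)

lemma image_Int_image_subset:
  "a \<le> s \<Longrightarrow> s \<le> t \<Longrightarrow> t \<le> r \<Longrightarrow> r \<le> b \<Longrightarrow> \<gamma> ` {s..t} \<inter> \<gamma> ` {t..r} \<subseteq> {\<gamma> t}"
  using inj by (auto simp: inj_on_def) (metis atLeastAtMost_iff order_antisym order_trans)

lemma image_Un_image: "s \<le> t \<Longrightarrow> t \<le> r \<Longrightarrow> \<gamma> ` {s..t} \<union> \<gamma> ` {t..r} = \<gamma> ` {s..r}"
  by (metis image_Un ivl_disj_un_two_touch(4))

lemma measure_image_split:
  assumes "a \<le> s" "s \<le> t" "t \<le> r" "r \<le> b"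
  shows "measure \<mu> (\<gamma> ` {s..r}) = measure \<mu> (\<gamma> ` {s..t}) + measure \<mu> (\<gamma> ` {t..r})"
proof -
  have "\<gamma> ` {s..t} \<inter> \<gamma> ` {t..r} \<in> null_sets \<mu>"
    by (rule null_sets_subset[OF singleton_null[of "\<gamma> t"]])
      (use assms image_in_sets image_Int_image_subset in auto)
  then have "measure \<mu> (\<gamma> ` {s..t} \<inter> \<gamma> ` {t..r}) = 0"
    by (auto simp: measure_def null_sets_def)
  then show ?thesis
    using measure_Un3[OF image_fmeasurable image_fmeasurable, of s t t r] assms image_Un_image[of s t r]
    by auto
qed

lemma measure_image_pos: "a \<le> s \<Longrightarrow> s < t \<Longrightarrow> t \<le> b \<Longrightarrow> 0 < measure \<mu> (\<gamma> ` {s..t})"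
  using emeasure_image_pos[of s t] emeasure_image_eq[of s t] by auto

lemma measure_image_mono:
  "a \<le> s \<Longrightarrow> s \<le> s' \<Longrightarrow> t' \<le> t \<Longrightarrow> t \<le> b \<Longrightarrow> measure \<mu> (\<gamma> ` {s'..t'}) \<le> measure \<mu> (\<gamma> ` {s..t})"
  by (intro measure_mono_fmeasurable) (auto intro: image_fmeasurable image_in_sets)

lemma dist_arc_measure:
  "a \<le> s \<Longrightarrow> s \<le> b \<Longrightarrow> a \<le> t \<Longrightarrow> t \<le> b \<Longrightarrow>
    dist (measure \<mu> (\<gamma> ` {a..s})) (measure \<mu> (\<gamma> ` {a..t})) = measure \<mu> (\<gamma> ` {min s t..max s t})"
  using measure_image_split[of a s t] measure_image_split[of a t s]
  by (cases "s \<le> t") (auto simp: min_def max_def dist_real_def)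

text \<open>Continuity of \<open>t \<mapsto> \<mu>(\<gamma>[a,t])\<close> is where non-atomicity of \<open>\<mu>\<close> is used: the images of
  shrinking intervals around \<open>t\<close> decrease to the null set \<open>{\<gamma> t}\<close>.\<close>

lemma emeasure_image_shrinking_tendsto_0:
  assumes t: "a \<le> t" "t \<le> b"
  shows "(\<lambda>n. emeasure \<mu> (\<gamma> ` {max a (t - 1 / Suc n) .. min b (t + 1 / Suc n)})) \<longlonglongrightarrow> 0"
proof -
  define I where "I n = {max a (t - 1 / Suc n) .. min b (t + 1 / Suc n)}" for n :: nat
  have "I n \<subseteq> I k" if "k \<le> n" for k n
  proof -
    have "1 / real (Suc n) \<le> 1 / real (Suc k)"
      using that by (intro divide_left_mono) auto
    then show ?thesis
      by (auto simp: I_def)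
  qed
  then have dec: "decseq (\<lambda>n. \<gamma> ` I n)"
    by (auto simp: decseq_def intro: image_mono)
  have fin: "emeasure \<mu> (\<gamma> ` I n) \<noteq> \<infinity>" for n
    using emeasure_image_finite by (simp add: I_def less_top)
  have "(\<Inter>n. I n) = {t}"
  proof (intro equalityI subsetI)
    fix x
    assume x: "x \<in> (\<Inter>n. I n)"
    have "\<bar>x - t\<bar> < d" if "0 < d" for d
    proof -
      obtain n where "1 / Suc n < d"
        using \<open>0 < d\<close> by (rule nat_approx_posE)
      moreover from x have "x \<in> I n"
        by blast
      ultimately show ?thesis
        by (auto simp: I_def abs_if)
    qed
    from this[of "\<bar>x - t\<bar>"] show "x \<in> {t}"
      by auto
  qed (use t in \<open>auto simp: I_def\<close>)
  then have "(\<Inter>n. \<gamma> ` I n) = {\<gamma> t}"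
    using image_INT[OF inj, of UNIV I] by (auto simp: I_def)
  moreover have "range (\<lambda>n. \<gamma> ` I n) \<subseteq> sets \<mu>"
    using image_in_sets by (auto simp: I_def)
  ultimately show ?thesis
    using Lim_emeasure_decseq[OF _ dec fin] emeasure_singleton by (simp add: I_def)
qed

lemma continuous_on_arc_measure: "continuous_on {a..b} (\<lambda>t. measure \<mu> (\<gamma> ` {a..t}))"
proof (clarsimp simp: continuous_on_iff)
  fix t e :: real
  assume t: "a \<le> t" "t \<le> b" and e: "0 < e"
  define I where "I n = {max a (t - 1 / Suc n) .. min b (t + 1 / Suc n)}" for n :: nat
  have "eventually (\<lambda>n. emeasure \<mu> (\<gamma> ` I n) < ennreal e) sequentially"
    using emeasure_image_shrinking_tendsto_0[OF t] e unfolding I_def by (intro order_tendstoD(2)) auto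
  then obtain n where "emeasure \<mu> (\<gamma> ` I n) < ennreal e"
    by (auto simp: eventually_sequentially)
  then have small: "measure \<mu> (\<gamma> ` I n) < e"
    using emeasure_image_finite[of "max a (t - 1 / Suc n)" "min b (t + 1 / Suc n)"] e
    by (simp add: I_def measure_def enn2real_less_iff less_top)
  show "\<exists>d>0. \<forall>s\<in>{a..b}. dist s t < d \<longrightarrow>
      dist (measure \<mu> (\<gamma> ` {a..s})) (measure \<mu> (\<gamma> ` {a..t})) < e"
  proof (intro exI[of _ "1 / Suc n"] conjI ballI impI)
    fix s
    assume s: "s \<in> {a..b}" "dist s t < 1 / Suc n"
    have "dist (measure \<mu> (\<gamma> ` {a..s})) (measure \<mu> (\<gamma> ` {a..t})) \<le> measure \<mu> (\<gamma> ` I n)"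
      using s t by (subst dist_arc_measure) (auto simp: I_def dist_real_def intro!: measure_image_mono)
    with small show "dist (measure \<mu> (\<gamma> ` {a..s})) (measure \<mu> (\<gamma> ` {a..t})) < e"
      by linarith
  qed simp
qed

lemma measure_image_strict_mono:
  "a \<le> s \<Longrightarrow> s < t \<Longrightarrow> t \<le> b \<Longrightarrow> measure \<mu> (\<gamma> ` {a..s}) < measure \<mu> (\<gamma> ` {a..t})"
  using measure_image_split[of a s t] measure_image_pos[of s t] by auto

lemma dyadic_points:
  obtains s where "\<And>k. a \<le> s k" "\<And>k. s k \<le> b"
    "\<And>k. measure \<mu> (\<gamma> ` {a..s k}) = measure \<mu> (\<gamma> ` {a..b}) / 2 ^ k"
    "\<And>k. s (Suc k) < s k" "s \<longlonglongrightarrow> a"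
proof -
  define \<Phi> where "\<Phi> t = measure \<mu> (\<gamma> ` {a..t})" for t
  define V where "V = \<Phi> b"
  have V_pos: "0 < V"
    unfolding V_def \<Phi>_def using measure_image_pos[of a b] a_less_b by simp
  have \<Phi>_cont: "continuous_on {a..b} \<Phi>"
    unfolding \<Phi>_def by (rule continuous_on_arc_measure)
  have "\<exists>t. a \<le> t \<and> t \<le> b \<and> \<Phi> t = V / 2 ^ k" for k
  proof (rule IVT')
    show "V / 2 ^ k \<le> \<Phi> b"
      using V_pos by (simp add: V_def divide_le_eq)
  qed (use V_pos a_less_b \<Phi>_cont in \<open>auto simp: \<Phi>_def measure_singleton\<close>)
  then obtain s where s: "\<And>k. a \<le> s k" "\<And>k. s k \<le> b" "\<And>k. \<Phi> (s k) = V / 2 ^ k"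
    by metis
  have s_dec: "s (Suc k) < s k" for k
  proof (rule ccontr)
    assume "\<not> s (Suc k) < s k"
    then have "\<Phi> (s k) \<le> \<Phi> (s (Suc k))"
      unfolding \<Phi>_def using s by (intro measure_image_mono) auto
    then show False
      using s(3)[of k] s(3)[of "Suc k"] V_pos by (simp add: field_simps)
  qed
  then have "decseq s"
    by (intro decseq_SucI less_imp_le)
  then obtain L where L: "s \<longlonglongrightarrow> L" "\<And>k. L \<le> s k"
    using decseq_convergent[of s a] s(1) by blast
  have L_ab: "L \<in> {a..b}"
    using LIMSEQ_le_const[OF L(1), of a] s(1) L(2)[of 0] s(2)[of 0] by auto
  have "(\<lambda>k. \<Phi> (s k)) \<longlonglongrightarrow> \<Phi> L"
    using s(1,2) by (intro continuous_on_tendsto_compose[OF \<Phi>_cont L(1) L_ab]) auto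
  moreover have "(\<lambda>k. \<Phi> (s k)) \<longlonglongrightarrow> 0"
    unfolding s(3) by (rule LIMSEQ_divide_realpow_zero) simp
  ultimately have "\<Phi> L = 0"
    by (rule LIMSEQ_unique)
  then have "L = a"
    using L_ab measure_image_strict_mono[of a L] by (force simp: \<Phi>_def measure_singleton)
  then show ?thesis
    using that s s_dec L(1) unfolding \<Phi>_def V_def by blast
qed

lemma nn_integral_image_split:
  assumes f: "f \<in> borel_measurable borel" and "a \<le> s" "s \<le> t" "t \<le> r" "r \<le> b"
  shows "(\<integral>\<^sup>+x\<in>\<gamma> ` {s..r}. f x \<partial>\<mu>) = (\<integral>\<^sup>+x\<in>\<gamma> ` {s..t}. f x \<partial>\<mu>) + (\<integral>\<^sup>+x\<in>\<gamma> ` {t..r}. f x \<partial>\<mu>)"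
proof -
  have "AE x in \<mu>. f x * indicator (\<gamma> ` {s..r}) x =
      f x * indicator (\<gamma> ` {s..t}) x + f x * indicator (\<gamma> ` {t..r}) x"
    using AE_not_in[OF singleton_null[of "\<gamma> t"]]
  proof eventually_elim
    case (elim x)
    then have "x \<notin> \<gamma> ` {s..t} \<inter> \<gamma> ` {t..r}"
      using image_Int_image_subset assms by blast
    moreover have "x \<in> \<gamma> ` {s..r} \<longleftrightarrow> x \<in> \<gamma> ` {s..t} \<or> x \<in> \<gamma> ` {t..r}"
      using image_Un_image[of s t r] assms by blast
    ultimately show ?case
      by (auto split: split_indicator)
  qed
  then have "(\<integral>\<^sup>+x\<in>\<gamma> ` {s..r}. f x \<partial>\<mu>) =
      (\<integral>\<^sup>+x. f x * indicator (\<gamma> ` {s..t}) x + f x * indicator (\<gamma> ` {t..r}) x \<partial>\<mu>)"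
    by (rule nn_integral_cong_AE)
  also have "\<dots> = (\<integral>\<^sup>+x\<in>\<gamma> ` {s..t}. f x \<partial>\<mu>) + (\<integral>\<^sup>+x\<in>\<gamma> ` {t..r}. f x \<partial>\<mu>)"
    using assms image_in_sets image_in_sets[unfolded sets_mu]
    by (intro nn_integral_add borel_measurable_times_ennreal f borel_measurable_indicator) auto
  finally show ?thesis .
qed

lemma nn_integral_image_mono:
  "a \<le> s \<Longrightarrow> s \<le> s' \<Longrightarrow> t' \<le> t \<Longrightarrow> t \<le> b \<Longrightarrow>
    (\<integral>\<^sup>+x\<in>\<gamma> ` {s'..t'}. f x \<partial>\<mu>) \<le> (\<integral>\<^sup>+x\<in>\<gamma> ` {s..t}. f x \<partial>\<mu>)"
  by (intro nn_integral_mono) (auto split: split_indicator)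

lemma nn_integral_image_telescope:
  assumes f: "f \<in> borel_measurable borel"
    and s: "\<And>k. a \<le> s k" "\<And>k. s k \<le> b" "\<And>k. s (Suc k) \<le> s k"
  shows "(\<Sum>k<n. \<integral>\<^sup>+x\<in>\<gamma> ` {s (Suc k)..s k}. f x \<partial>\<mu>) \<le> (\<integral>\<^sup>+x\<in>\<gamma> ` {a..b}. f x \<partial>\<mu>)"
proof -
  have "decseq s"
    using s(3) by (rule decseq_SucI)
  have "(\<Sum>k<n. \<integral>\<^sup>+x\<in>\<gamma> ` {s (Suc k)..s k}. f x \<partial>\<mu>) = (\<integral>\<^sup>+x\<in>\<gamma> ` {s n..s 0}. f x \<partial>\<mu>)"
  proof (induction n)
    case 0
    show ?case
      by (simp add: nn_integral_null_set singleton_null)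
  next
    case (Suc n)
    have "(\<integral>\<^sup>+x\<in>\<gamma> ` {s (Suc n)..s 0}. f x \<partial>\<mu>) =
        (\<integral>\<^sup>+x\<in>\<gamma> ` {s (Suc n)..s n}. f x \<partial>\<mu>) + (\<integral>\<^sup>+x\<in>\<gamma> ` {s n..s 0}. f x \<partial>\<mu>)"
      using s \<open>decseq s\<close> by (intro nn_integral_image_split[OF f]) (auto simp: decseqD)
    with Suc.IH show ?case
      by (simp add: add.commute)
  qed
  also have "\<dots> \<le> (\<integral>\<^sup>+x\<in>\<gamma> ` {a..b}. f x \<partial>\<mu>)"
    using s by (intro nn_integral_image_mono) auto
  finally show ?thesis .
qed

lemma subpath:
  assumes "a \<le> c" "c < d" "d \<le> b"
  shows "arc_chord_path \<mu> \<beta> C c d \<gamma>"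
proof unfold_locales
  fix s t
  assume "c \<le> s" "s < t" "t \<le> d"
  moreover from this assms have "a \<le> s" "t \<le> b"
    by auto
  ultimately show "0 < emeasure \<mu> (\<gamma> ` {s..t})" "emeasure \<mu> (\<gamma> ` {s..t}) < \<infinity>"
    "diameter (\<gamma> ` {s..t}) powr \<beta> \<le> C * measure \<mu> (\<gamma> ` {s..t})"
    using emeasure_image_pos emeasure_image_less arc_chord by auto
qed (use assms in \<open>auto simp: sets_mu intro: continuous_on_subset[OF continuous]
       inj_on_subset[OF inj] emeasure_singleton beta_pos C_pos\<close>)

lemma image_reverse: "(\<lambda>t. \<gamma> (- t)) ` {s..t} = \<gamma> ` {-t..-s}"
  by (simp add: image_image[of \<gamma> uminus, symmetric])

lemma reverse: "arc_chord_path \<mu> \<beta> C (-b) (-a) (\<lambda>t. \<gamma> (- t))"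
proof unfold_locales
  show "continuous_on {-b..-a} (\<lambda>t. \<gamma> (- t))"
    by (rule continuous_on_compose2[OF continuous]) (auto intro: continuous_intros)
  show "inj_on (\<lambda>t. \<gamma> (- t)) {-b..-a}"
  proof (rule inj_onI)
    fix x y
    assume "x \<in> {-b..-a}" "y \<in> {-b..-a}" "\<gamma> (- x) = \<gamma> (- y)"
    then show "x = y"
      using inj_onD[OF inj, of "- x" "- y"] by auto
  qed
qed (auto simp: image_reverse intro!: emeasure_image_pos emeasure_image_less arc_chord
       sets_mu emeasure_singleton beta_pos C_pos a_less_b simp flip: infinity_ennreal_def)

lemma exists_half_point:
  obtains c where "a < c" "c < b" "measure \<mu> (\<gamma> ` {a..c}) = measure \<mu> (\<gamma> ` {a..b}) / 2"
    "measure \<mu> (\<gamma> ` {c..b}) = measure \<mu> (\<gamma> ` {a..b}) / 2"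
proof -
  define V where "V = measure \<mu> (\<gamma> ` {a..b})"
  have V_pos: "0 < V"
    unfolding V_def using measure_image_pos[of a b] a_less_b by simp
  have "\<exists>c. a \<le> c \<and> c \<le> b \<and> measure \<mu> (\<gamma> ` {a..c}) = V / 2"
    by (rule IVT') (use V_pos continuous_on_arc_measure a_less_b in \<open>auto simp: V_def measure_singleton\<close>)
  then obtain c where c: "a \<le> c" "c \<le> b" "measure \<mu> (\<gamma> ` {a..c}) = V / 2"
    by blast
  moreover have "measure \<mu> (\<gamma> ` {c..b}) = V / 2"
    using measure_image_split[of a c b] c by (simp add: V_def)
  moreover have "a \<noteq> c" "c \<noteq> b"
    using c V_pos by (auto simp: V_def measure_singleton)
  ultimately show ?thesis
    using that unfolding V_def by force
qed

end

locale arc_chord_hajlasz = arc_chord_path +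
  fixes u w :: "'a::metric_space \<Rightarrow> real" and D :: "'a set"
  assumes u_continuous: "continuous_on UNIV u"
    and w_measurable: "w \<in> borel_measurable borel" and w_nonneg: "\<And>x. 0 \<le> w x"
    and D_sets: "D \<in> sets borel" and D_null: "emeasure \<mu> (\<gamma> ` {a..b} \<inter> D) = 0"
    and hajlasz: "\<And>x y. x \<notin> D \<Longrightarrow> y \<notin> D \<Longrightarrow> \<bar>u x - u y\<bar> \<le> dist x y powr \<beta> * (w x + w y)"
begin

lemma exists_point_below_average:
  assumes "a \<le> s" "s < t" "t \<le> b"
  obtains r where "r \<in> {s..t}" "\<gamma> r \<notin> D"
    "ennreal (w (\<gamma> r) * measure \<mu> (\<gamma> ` {s..t})) \<le> (\<integral>\<^sup>+x\<in>\<gamma> ` {s..t}. ennreal (w x) \<partial>\<mu>)"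
proof -
  have "\<gamma> ` {a..b} \<inter> D \<in> null_sets \<mu>"
    using D_null image_in_sets[of a b] D_sets by (auto simp: null_sets_def sets_mu)
  then have "\<exists>x\<in>\<gamma> ` {s..t} - \<gamma> ` {a..b} \<inter> D.
      ennreal (w x * measure \<mu> (\<gamma> ` {s..t})) \<le> (\<integral>\<^sup>+x\<in>\<gamma> ` {s..t}. ennreal (w x) \<partial>\<mu>)"
    using assms by (intro exists_le_average image_in_sets emeasure_image_pos emeasure_image_finite)
      (auto simp: w_measurable w_nonneg)
  then obtain r where "r \<in> {s..t}" "\<gamma> r \<notin> \<gamma> ` {a..b} \<inter> D"
    "ennreal (w (\<gamma> r) * measure \<mu> (\<gamma> ` {s..t})) \<le> (\<integral>\<^sup>+x\<in>\<gamma> ` {s..t}. ennreal (w x) \<partial>\<mu>)"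
    by blast
  with assms that show ?thesis
    by auto
qed

lemma hajlasz_arc_chord_bound:
  assumes "a \<le> s" "s < t" "t \<le> b" "x \<in> \<gamma> ` {s..t}" "y \<in> \<gamma> ` {s..t}" "x \<notin> D" "y \<notin> D"
  shows "\<bar>u x - u y\<bar> \<le> C * measure \<mu> (\<gamma> ` {s..t}) * (w x + w y)"
proof -
  have "dist x y \<le> diameter (\<gamma> ` {s..t})"
    using assms by (intro diameter_bounded_bound compact_imp_bounded compact_image) auto
  then have "dist x y powr \<beta> \<le> C * measure \<mu> (\<gamma> ` {s..t})"
    using arc_chord[OF assms(1-3)] beta_pos powr_mono2[of \<beta> "dist x y"] by fastforce
  then show ?thesis
    using hajlasz[OF assms(6,7)] w_nonneg[of x] w_nonneg[of y]
    by (meson add_nonneg_nonneg mult_right_mono order_trans)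
qed

lemma subpath_hajlasz:
  assumes "a \<le> c" "c < d" "d \<le> b"
  shows "arc_chord_hajlasz \<mu> \<beta> C c d \<gamma> u w D"
proof (rule arc_chord_hajlasz.intro[OF subpath[OF assms]], unfold_locales)
  have "emeasure \<mu> (\<gamma> ` {c..d} \<inter> D) \<le> emeasure \<mu> (\<gamma> ` {a..b} \<inter> D)"
    using assms image_in_sets[of a b] D_sets by (intro emeasure_mono) (auto simp: sets_mu)
  then show "emeasure \<mu> (\<gamma> ` {c..d} \<inter> D) = 0"
    using D_null by simp
qed (use u_continuous w_measurable w_nonneg D_sets hajlasz in auto)

lemma reverse_hajlasz: "arc_chord_hajlasz \<mu> \<beta> C (-b) (-a) (\<lambda>t. \<gamma> (- t)) u w D"
  by (rule arc_chord_hajlasz.intro[OF reverse], unfold_locales)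
    (use u_continuous w_measurable w_nonneg D_sets hajlasz D_null in \<open>auto simp: image_reverse\<close>)

text \<open>A chain of good points \<open>r k \<longrightarrow> a\<close>: consecutive points lie in a common piece of
  measure \<open>3 \<cdot> 2\<^sup>-\<^sup>k\<^sup>-\<^sup>2 \<mu>(\<gamma>[a,b])\<close>, so by the arc-chord property the increments of \<open>u\<close>
  are bounded by the integrals of \<open>w\<close> over two consecutive pieces.\<close>

context
  fixes s r :: "nat \<Rightarrow> real"
  assumes s: "\<And>k. a \<le> s k" "\<And>k. s k \<le> b" "\<And>k. s (Suc k) < s k"
    "\<And>k. measure \<mu> (\<gamma> ` {a..s k}) = measure \<mu> (\<gamma> ` {a..b}) / 2 ^ k"
    and s_tendsto: "s \<longlonglongrightarrow> a"
    and r: "\<And>k. r k \<in> {s (Suc k)..s k}" "\<And>k. \<gamma> (r k) \<notin> D"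
    "\<And>k. ennreal (w (\<gamma> (r k)) * measure \<mu> (\<gamma> ` {s (Suc k)..s k}))
       \<le> (\<integral>\<^sup>+x\<in>\<gamma> ` {s (Suc k)..s k}. ennreal (w x) \<partial>\<mu>)"
begin

lemma chain_piece_measure:
  "measure \<mu> (\<gamma> ` {s (Suc k)..s k}) = measure \<mu> (\<gamma> ` {a..b}) / 2 ^ Suc k"
  using measure_image_split[of a "s (Suc k)" "s k"] s(1-4)[of k] s(1-4)[of "Suc k"] by auto

lemma chain_step:
  "ennreal \<bar>u (\<gamma> (r k)) - u (\<gamma> (r (Suc k)))\<bar> \<le>
     ennreal (3/2 * C) * (\<integral>\<^sup>+x\<in>\<gamma> ` {s (Suc k)..s k}. ennreal (w x) \<partial>\<mu>) +
     ennreal (3 * C) * (\<integral>\<^sup>+x\<in>\<gamma> ` {s (Suc (Suc k))..s (Suc k)}. ennreal (w x) \<partial>\<mu>)"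
proof -
  define V where "V = measure \<mu> (\<gamma> ` {a..b})"
  define x where "x = \<gamma> (r k)"
  define y where "y = \<gamma> (r (Suc k))"
  have V: "0 \<le> V"
    by (simp add: V_def)
  have "measure \<mu> (\<gamma> ` {s (Suc (Suc k))..s k}) = 3 * V / 2 ^ Suc (Suc k)"
    using measure_image_split[of "s (Suc (Suc k))" "s (Suc k)" "s k"] s(1-4)[of k] s(1-4)[of "Suc k"]
      s(1)[of "Suc (Suc k)"] chain_piece_measure[of k] chain_piece_measure[of "Suc k"]
    by (simp add: V_def field_simps less_imp_le)
  moreover have "x \<in> \<gamma> ` {s (Suc (Suc k))..s k}" "y \<in> \<gamma> ` {s (Suc (Suc k))..s k}"
    using r(1)[of k] r(1)[of "Suc k"] s(3)[of k] s(3)[of "Suc k"] by (auto simp: x_def y_def)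
  moreover have "s (Suc (Suc k)) < s k"
    using s(3)[of k] s(3)[of "Suc k"] by linarith
  moreover have "x \<notin> D" "y \<notin> D"
    using r(2) by (simp_all add: x_def y_def)
  ultimately have "\<bar>u x - u y\<bar> \<le> C * (3 * V / 2 ^ Suc (Suc k)) * (w x + w y)"
    using hajlasz_arc_chord_bound[OF s(1) _ s(2)] by metis
  also have "\<dots> = 3/2 * C * (w x * (V / 2 ^ Suc k)) + 3 * C * (w y * (V / 2 ^ Suc (Suc k)))"
    by (simp add: field_simps)
  finally have "ennreal \<bar>u x - u y\<bar> \<le>
      ennreal (3/2 * C) * ennreal (w x * (V / 2 ^ Suc k)) +
      ennreal (3 * C) * ennreal (w y * (V / 2 ^ Suc (Suc k)))"
    using C_pos V w_nonneg[of x] w_nonneg[of y]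
    by (simp add: ennreal_mult[symmetric] ennreal_plus[symmetric] ennreal_leI del: ennreal_plus)
  also have "\<dots> \<le> ennreal (3/2 * C) * (\<integral>\<^sup>+x\<in>\<gamma> ` {s (Suc k)..s k}. ennreal (w x) \<partial>\<mu>) +
     ennreal (3 * C) * (\<integral>\<^sup>+x\<in>\<gamma> ` {s (Suc (Suc k))..s (Suc k)}. ennreal (w x) \<partial>\<mu>)"
    using r(3)[of k] r(3)[of "Suc k"] chain_piece_measure[of k] chain_piece_measure[of "Suc k"]
    by (intro add_mono mult_left_mono) (auto simp: x_def y_def V_def)
  finally show ?thesis
    by (simp add: x_def y_def)
qed

lemma chain_telescope:
  "ennreal \<bar>u (\<gamma> (r 0)) - u (\<gamma> (r n))\<bar> \<le> ennreal (9/2 * C) * (\<integral>\<^sup>+x\<in>\<gamma> ` {a..b}. ennreal (w x) \<partial>\<mu>)"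
proof -
  define I where "I = (\<integral>\<^sup>+x\<in>\<gamma> ` {a..b}. ennreal (w x) \<partial>\<mu>)"
  define J where "J k = (\<integral>\<^sup>+x\<in>\<gamma> ` {s (Suc k)..s k}. ennreal (w x) \<partial>\<mu>)" for k
  have J_sum: "(\<Sum>k<n. J k) \<le> I" "(\<Sum>k<n. J (Suc k)) \<le> I"
    unfolding I_def J_def
    by (rule nn_integral_image_telescope nn_integral_image_telescope[of _ "\<lambda>k. s (Suc k)"];
        use s w_measurable in \<open>auto intro: less_imp_le\<close>)+
  have "\<bar>u (\<gamma> (r 0)) - u (\<gamma> (r n))\<bar> \<le> (\<Sum>k<n. \<bar>u (\<gamma> (r k)) - u (\<gamma> (r (Suc k)))\<bar>)"
    by (induction n) auto
  then have "ennreal \<bar>u (\<gamma> (r 0)) - u (\<gamma> (r n))\<bar> \<le> (\<Sum>k<n. ennreal \<bar>u (\<gamma> (r k)) - u (\<gamma> (r (Suc k)))\<bar>)"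
    by (simp add: ennreal_leI)
  also have "\<dots> \<le> (\<Sum>k<n. ennreal (3/2 * C) * J k + ennreal (3 * C) * J (Suc k))"
    unfolding J_def by (intro sum_mono chain_step)
  also have "\<dots> = ennreal (3/2 * C) * (\<Sum>k<n. J k) + ennreal (3 * C) * (\<Sum>k<n. J (Suc k))"
    by (simp add: sum.distrib sum_distrib_left)
  also have "\<dots> \<le> ennreal (3/2 * C) * I + ennreal (3 * C) * I"
    using J_sum by (intro add_mono mult_left_mono) auto
  also have "\<dots> = ennreal (9/2 * C) * I"
    using C_pos by (simp add: distrib_right[symmetric] ennreal_plus[symmetric] del: ennreal_plus)
  finally show ?thesis
    unfolding I_def .
qed

lemma chain_tendsto: "r \<longlonglongrightarrow> a"
proof (rule tendsto_sandwich[OF _ _ LIMSEQ_Suc[OF s_tendsto] s_tendsto])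
  show "\<forall>\<^sub>F k in sequentially. s (Suc k) \<le> r k" "\<forall>\<^sub>F k in sequentially. r k \<le> s k"
    using r(1) by auto
qed

end

lemma left_endpoint_estimate:
  obtains z where "z \<in> {a..b}" "\<gamma> z \<notin> D"
    "ennreal (w (\<gamma> z) * measure \<mu> (\<gamma> ` {a..b})) \<le> 2 * (\<integral>\<^sup>+x\<in>\<gamma> ` {a..b}. ennreal (w x) \<partial>\<mu>)"
    "ennreal \<bar>u (\<gamma> a) - u (\<gamma> z)\<bar> \<le> ennreal (9/2 * C) * (\<integral>\<^sup>+x\<in>\<gamma> ` {a..b}. ennreal (w x) \<partial>\<mu>)"
proof -
  define I where "I = (\<integral>\<^sup>+x\<in>\<gamma> ` {a..b}. ennreal (w x) \<partial>\<mu>)"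
  obtain s where s: "\<And>k. a \<le> s k" "\<And>k. s k \<le> b" "\<And>k. s (Suc k) < s k"
    "\<And>k. measure \<mu> (\<gamma> ` {a..s k}) = measure \<mu> (\<gamma> ` {a..b}) / 2 ^ k" and s_tendsto: "s \<longlonglongrightarrow> a"
    by (rule dyadic_points) blast
  have "\<exists>r. r \<in> {s (Suc k)..s k} \<and> \<gamma> r \<notin> D \<and> ennreal (w (\<gamma> r) * measure \<mu> (\<gamma> ` {s (Suc k)..s k}))
      \<le> (\<integral>\<^sup>+x\<in>\<gamma> ` {s (Suc k)..s k}. ennreal (w x) \<partial>\<mu>)" for k
    by (rule exists_point_below_average[OF s(1) s(3) s(2)]) blast
  then obtain r where r: "\<And>k. r k \<in> {s (Suc k)..s k}" "\<And>k. \<gamma> (r k) \<notin> D"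
    "\<And>k. ennreal (w (\<gamma> (r k)) * measure \<mu> (\<gamma> ` {s (Suc k)..s k}))
       \<le> (\<integral>\<^sup>+x\<in>\<gamma> ` {s (Suc k)..s k}. ennreal (w x) \<partial>\<mu>)"
    by metis
  have r_ab: "r k \<in> {a..b}" for k
    using r(1)[of k] s(1)[of "Suc k"] s(2)[of k] by auto
  note chain = chain_tendsto[of s r, OF s s_tendsto r] chain_telescope[of s r, OF s s_tendsto r]
    chain_piece_measure[of s r, OF s s_tendsto r]
  have "(\<lambda>n. u (\<gamma> (r n))) \<longlonglongrightarrow> u (\<gamma> a)"
    using continuous_on_compose2[OF u_continuous continuous] a_less_b r_ab
    by (intro continuous_on_tendsto_compose[OF _ chain(1)]) auto
  then have "(\<lambda>n. \<bar>u (\<gamma> (r 0)) - u (\<gamma> (r n))\<bar>) \<longlonglongrightarrow> \<bar>u (\<gamma> (r 0)) - u (\<gamma> a)\<bar>"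
    by (intro tendsto_intros)
  then have "ennreal \<bar>u (\<gamma> (r 0)) - u (\<gamma> a)\<bar> \<le> ennreal (9/2 * C) * I"
    unfolding I_def by (rule ennreal_le_of_tendsto) (rule chain(2))
  moreover have "ennreal (w (\<gamma> (r 0)) * measure \<mu> (\<gamma> ` {a..b})) \<le> 2 * I"
  proof -
    have "ennreal (w (\<gamma> (r 0)) * measure \<mu> (\<gamma> ` {a..b})) =
        2 * ennreal (w (\<gamma> (r 0)) * measure \<mu> (\<gamma> ` {s 1..s 0}))"
    proof -
      have eq: "w (\<gamma> (r 0)) * measure \<mu> (\<gamma> ` {a..b}) = 2 * (w (\<gamma> (r 0)) * measure \<mu> (\<gamma> ` {s 1..s 0}))"
        using chain(3)[of 0] by simp
      show ?thesis
        unfolding eq using w_nonneg by (simp add: ennreal_mult)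
    qed
    also have "\<dots> \<le> 2 * (\<integral>\<^sup>+x\<in>\<gamma> ` {s 1..s 0}. ennreal (w x) \<partial>\<mu>)"
      using r(3)[of 0] by (intro mult_left_mono) auto
    also have "\<dots> \<le> 2 * I"
      unfolding I_def using s(1)[of 1] s(2)[of 0] by (intro mult_left_mono nn_integral_image_mono) auto
    finally show ?thesis .
  qed
  ultimately show ?thesis
    using that[of "r 0"] r_ab r(2) unfolding I_def by (simp add: abs_minus_commute)
qed

lemma right_endpoint_estimate:
  obtains y where "y \<in> {a..b}" "\<gamma> y \<notin> D"
    "ennreal (w (\<gamma> y) * measure \<mu> (\<gamma> ` {a..b})) \<le> 2 * (\<integral>\<^sup>+x\<in>\<gamma> ` {a..b}. ennreal (w x) \<partial>\<mu>)"
    "ennreal \<bar>u (\<gamma> y) - u (\<gamma> b)\<bar> \<le> ennreal (9/2 * C) * (\<integral>\<^sup>+x\<in>\<gamma> ` {a..b}. ennreal (w x) \<partial>\<mu>)"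
proof -
  interpret reversed: arc_chord_hajlasz \<mu> \<beta> C "-b" "-a" "\<lambda>t. \<gamma> (- t)" u w D
    by (rule reverse_hajlasz)
  show ?thesis
  proof (rule reversed.left_endpoint_estimate)
    fix y
    assume "y \<in> {-b..-a}" "\<gamma> (- y) \<notin> D"
      "ennreal (w (\<gamma> (- y)) * measure \<mu> ((\<lambda>t. \<gamma> (- t)) ` {-b..-a})) \<le>
        2 * (\<integral>\<^sup>+x\<in>(\<lambda>t. \<gamma> (- t)) ` {-b..-a}. ennreal (w x) \<partial>\<mu>)"
      "ennreal \<bar>u (\<gamma> (- (- b))) - u (\<gamma> (- y))\<bar> \<le>
        ennreal (9/2 * C) * (\<integral>\<^sup>+x\<in>(\<lambda>t. \<gamma> (- t)) ` {-b..-a}. ennreal (w x) \<partial>\<mu>)"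
    with that[of "- y"] show thesis
      by (auto simp: image_reverse abs_minus_commute)
  qed
qed

text \<open>Chains from both ends meet near the point halving the measure; their last points are joined
  directly through the arc-chord property of the whole path.\<close>

lemma endpoint_increment_bound:
  "ennreal \<bar>u (\<gamma> a) - u (\<gamma> b)\<bar> \<le> ennreal (9 * C) * (\<integral>\<^sup>+x\<in>\<gamma> ` {a..b}. ennreal (w x) \<partial>\<mu>)"
proof -
  define V where "V = measure \<mu> (\<gamma> ` {a..b})"
  obtain c where c: "a < c" "c < b" "measure \<mu> (\<gamma> ` {a..c}) = V / 2" "measure \<mu> (\<gamma> ` {c..b}) = V / 2"
    unfolding V_def by (rule exists_half_point)
  interpret left: arc_chord_hajlasz \<mu> \<beta> C a c \<gamma> u w D
    using c by (intro subpath_hajlasz) auto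
  interpret right: arc_chord_hajlasz \<mu> \<beta> C c b \<gamma> u w D
    using c by (intro subpath_hajlasz) auto
  define IL where "IL = (\<integral>\<^sup>+x\<in>\<gamma> ` {a..c}. ennreal (w x) \<partial>\<mu>)"
  define IR where "IR = (\<integral>\<^sup>+x\<in>\<gamma> ` {c..b}. ennreal (w x) \<partial>\<mu>)"
  obtain z where z: "z \<in> {a..c}" "\<gamma> z \<notin> D" "ennreal (w (\<gamma> z) * (V / 2)) \<le> 2 * IL"
    "ennreal \<bar>u (\<gamma> a) - u (\<gamma> z)\<bar> \<le> ennreal (9/2 * C) * IL"
    by (rule left.left_endpoint_estimate) (use c in \<open>auto simp: IL_def\<close>)
  obtain y where y: "y \<in> {c..b}" "\<gamma> y \<notin> D" "ennreal (w (\<gamma> y) * (V / 2)) \<le> 2 * IR"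
    "ennreal \<bar>u (\<gamma> y) - u (\<gamma> b)\<bar> \<le> ennreal (9/2 * C) * IR"
    by (rule right.right_endpoint_estimate) (use c in \<open>auto simp: IR_def\<close>)
  have "\<bar>u (\<gamma> z) - u (\<gamma> y)\<bar> \<le> C * V * (w (\<gamma> z) + w (\<gamma> y))"
    unfolding V_def using z y c by (intro hajlasz_arc_chord_bound a_less_b) auto
  then have "ennreal \<bar>u (\<gamma> z) - u (\<gamma> y)\<bar> \<le>
      ennreal (2 * C) * ennreal (w (\<gamma> z) * (V / 2)) + ennreal (2 * C) * ennreal (w (\<gamma> y) * (V / 2))"
    using C_pos w_nonneg[of "\<gamma> z"] w_nonneg[of "\<gamma> y"]
    by (simp add: V_def ennreal_mult[symmetric] ennreal_plus[symmetric] ennreal_leI algebra_simps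
        del: ennreal_plus)
  also have "\<dots> \<le> ennreal (2 * C) * (2 * IL) + ennreal (2 * C) * (2 * IR)"
    using z(3) y(3) by (intro add_mono mult_left_mono) auto
  also have "\<dots> = ennreal (4 * C) * (IL + IR)"
    using C_pos ennreal_mult[of "2 * C" 2]
    by (simp add: distrib_left mult.assoc[symmetric] del: ennreal_mult ennreal_mult')
  finally have middle: "ennreal \<bar>u (\<gamma> z) - u (\<gamma> y)\<bar> \<le> ennreal (4 * C) * (IL + IR)" .
  have "ennreal \<bar>u (\<gamma> a) - u (\<gamma> b)\<bar> \<le>
      ennreal \<bar>u (\<gamma> a) - u (\<gamma> z)\<bar> + ennreal \<bar>u (\<gamma> z) - u (\<gamma> y)\<bar> + ennreal \<bar>u (\<gamma> y) - u (\<gamma> b)\<bar>"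
    by (simp add: ennreal_plus[symmetric] ennreal_leI del: ennreal_plus)
  also have "\<dots> \<le> ennreal (9/2 * C) * IL + ennreal (4 * C) * (IL + IR) + ennreal (9/2 * C) * IR"
    using z(4) y(4) middle by (intro add_mono)
  also have "\<dots> \<le> ennreal (9/2 * C) * (IL + IR) + ennreal (4 * C) * (IL + IR)"
    by (simp add: algebra_simps)
  also have "\<dots> \<le> ennreal (9 * C) * (IL + IR)"
    using C_pos
    by (simp add: distrib_right[symmetric] ennreal_plus[symmetric] mult_right_mono del: ennreal_plus)
  also have "IL + IR = (\<integral>\<^sup>+x\<in>\<gamma> ` {a..b}. ennreal (w x) \<partial>\<mu>)"
    unfolding IL_def IR_def using c w_measurable by (intro nn_integral_image_split[symmetric]) auto
  finally show ?thesis .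
qed

end

lemma pimage_eq [simp]: "pimage (a, b, \<gamma>) = \<gamma> ` {a..b}"
  by (simp add: pimage_def)

locale arc_chord_family =
  fixes \<mu> :: "'a::metric_space measure" and \<beta> C :: real and \<Gamma>s :: "'a rpath set"
  assumes sets_mu: "sets \<mu> = sets borel" and emeasure_singleton: "\<And>x. emeasure \<mu> {x} = 0"
    and Gamma_subset: "\<Gamma>s \<subseteq> Gamma_mu \<mu>" and subpath_closed: "subpath_closed \<Gamma>s"
    and beta_pos: "0 < \<beta>" and C_pos: "0 < C"
    and arc_chord_bound: "\<And>P. P \<in> \<Gamma>s \<Longrightarrow>
      ennreal (diameter (pimage P) powr \<beta>) \<le> ennreal C * emeasure \<mu> (pimage P)"
begin

lemma arc_chord_path_if_mem:
  assumes P: "(a, b, \<gamma>) \<in> \<Gamma>s"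
  shows "arc_chord_path \<mu> \<beta> C a b \<gamma>"
proof -
  have \<Gamma>: "a < b" "continuous_on {a..b} \<gamma>" "inj_on \<gamma> {a..b}"
    "\<And>s t. a \<le> s \<Longrightarrow> s < t \<Longrightarrow> t \<le> b \<Longrightarrow> 0 < emeasure \<mu> (\<gamma> ` {s..t}) \<and> emeasure \<mu> (\<gamma> ` {s..t}) < \<infinity>"
    using Gamma_subset P unfolding Gamma_mu_def by auto
  show ?thesis
  proof unfold_locales
    fix s t
    assume st: "a \<le> s" "s < t" "t \<le> b"
    then have "(s, t, \<gamma>) \<in> \<Gamma>s"
      using subpath_closed P unfolding subpath_closed_def by blast
    then have "ennreal (diameter (\<gamma> ` {s..t}) powr \<beta>) \<le> ennreal C * emeasure \<mu> (\<gamma> ` {s..t})"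
      using arc_chord_bound by fastforce
    also have "\<dots> = ennreal (C * measure \<mu> (\<gamma> ` {s..t}))"
      using \<Gamma>(4)[OF st] C_pos emeasure_eq_ennreal_measure[of \<mu> "\<gamma> ` {s..t}"]
      by (simp add: ennreal_mult less_top)
    finally show "diameter (\<gamma> ` {s..t}) powr \<beta> \<le> C * measure \<mu> (\<gamma> ` {s..t})"
      using C_pos by (simp add: ennreal_le_iff)
  qed (use sets_mu emeasure_singleton \<Gamma> C_pos beta_pos in auto)
qed

lemma pimage_in_sets:
  assumes "P \<in> \<Gamma>s"
  shows "pimage P \<in> sets borel"
proof -
  obtain a b \<gamma> where P: "P = (a, b, \<gamma>)"
    by (cases P)
  interpret path: arc_chord_path \<mu> \<beta> C a b \<gamma>
    using arc_chord_path_if_mem assms P by simp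
  show ?thesis
    using path.image_in_sets[of a b] P by (simp add: sets_mu)
qed

lemma path_increment_bound:
  assumes P: "(a, b, \<gamma>) \<in> \<Gamma>s" and st: "s \<in> {a..b}" "t \<in> {a..b}"
    and u: "continuous_on UNIV u" and w: "w \<in> borel_measurable borel" "\<And>x. 0 \<le> w x"
    and D: "D \<in> sets borel" "emeasure \<mu> (\<gamma> ` {a..b} \<inter> D) = 0"
    and hajlasz: "\<And>x y. x \<notin> D \<Longrightarrow> y \<notin> D \<Longrightarrow> \<bar>u x - u y\<bar> \<le> dist x y powr \<beta> * (w x + w y)"
  shows "ennreal \<bar>u (\<gamma> s) - u (\<gamma> t)\<bar> \<le> ennreal (9 * C) * path_int \<mu> (a, b, \<gamma>) (\<lambda>x. ennreal (w x))"
proof -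
  interpret arc_chord_hajlasz \<mu> \<beta> C a b \<gamma> u w D
    using arc_chord_path_if_mem[OF P] u w D hajlasz
    by (simp add: arc_chord_hajlasz_def arc_chord_hajlasz_axioms_def)
  have bound: "ennreal \<bar>u (\<gamma> s) - u (\<gamma> t)\<bar> \<le> ennreal (9 * C) * path_int \<mu> (a, b, \<gamma>) (\<lambda>x. ennreal (w x))"
    if "a \<le> s" "s \<le> t" "t \<le> b" for s t
  proof (cases "s = t")
    case False
    interpret sub: arc_chord_hajlasz \<mu> \<beta> C s t \<gamma> u w D
      using that False by (intro subpath_hajlasz) auto
    have "ennreal \<bar>u (\<gamma> s) - u (\<gamma> t)\<bar> \<le> ennreal (9 * C) * (\<integral>\<^sup>+x\<in>\<gamma> ` {s..t}. ennreal (w x) \<partial>\<mu>)"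
      by (rule sub.endpoint_increment_bound)
    also have "\<dots> \<le> ennreal (9 * C) * path_int \<mu> (a, b, \<gamma>) (\<lambda>x. ennreal (w x))"
      unfolding path_int_def pimage_eq using that by (intro mult_left_mono nn_integral_image_mono) auto
    finally show ?thesis .
  qed simp
  show ?thesis
    using bound[of s t] bound[of t s] st by (cases "s \<le> t") (auto simp: abs_minus_commute)
qed

end

section \<open>Modulus\<close>

lemma Mod_le_nn_integral:
  assumes "g \<in> borel_measurable borel" "\<And>P. P \<in> \<Gamma> \<Longrightarrow> 1 \<le> path_int \<mu> P g"
  shows "Mod \<mu> m p \<Gamma> \<le> (\<integral>\<^sup>+x. enn_powr (g x) p \<partial>m)"
  unfolding Mod_def using assms by (intro INF_lower) auto

lemma Mod_empty: "0 < p \<Longrightarrow> Mod \<mu> m p {} = 0"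
  using Mod_le_nn_integral[of "\<lambda>x. 0" "{}" \<mu> m p] by (simp add: enn_powr_zero)

lemma path_int_infinite_if_null_or_infinite:
  assumes sets_mu: "sets \<mu> = sets borel" and P: "pimage P \<in> sets borel" and N: "N \<in> sets borel"
    and G: "G \<in> borel_measurable borel" and c: "0 < c"
    and bad: "0 < emeasure \<mu> (pimage P \<inter> N) \<or> path_int \<mu> P G = \<infinity>"
  shows "path_int \<mu> P (\<lambda>x. if x \<in> N then \<infinity> else ennreal c * G x) = \<infinity>"
proof (cases "0 < emeasure \<mu> (pimage P \<inter> N)")
  case True
  have "(\<integral>\<^sup>+x. \<infinity> * indicator (pimage P \<inter> N) x \<partial>\<mu>) \<le> path_int \<mu> P (\<lambda>x. if x \<in> N then \<infinity> else ennreal c * G x)"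
    unfolding path_int_def by (intro nn_integral_mono) (auto split: split_indicator)
  moreover have "(\<integral>\<^sup>+x. \<infinity> * indicator (pimage P \<inter> N) x \<partial>\<mu>) = \<infinity>"
    using True P N sets_mu by (simp add: nn_integral_cmult_indicator ennreal_mult_top)
  ultimately show ?thesis
    by (simp add: top_unique)
next
  case False
  have "(\<integral>\<^sup>+x. ennreal c * (G x * indicator (pimage P) x) \<partial>\<mu>) \<le>
      path_int \<mu> P (\<lambda>x. if x \<in> N then \<infinity> else ennreal c * G x)"
    unfolding path_int_def by (intro nn_integral_mono) (auto split: split_indicator)
  moreover have "(\<integral>\<^sup>+x. ennreal c * (G x * indicator (pimage P) x) \<partial>\<mu>) = ennreal c * path_int \<mu> P G"
    unfolding path_int_def using G P sets_mu by (intro nn_integral_cmult) auto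
  ultimately show ?thesis
    using False bad c by (simp add: ennreal_mult_top top_unique)
qed

text \<open>Admissible functions: infinite on the null set \<open>N\<close>, and an arbitrarily small multiple of
  \<open>G\<close> elsewhere.\<close>

lemma Mod_eq_0_if_null_or_infinite:
  fixes \<mu> m :: "'a::topological_space measure"
  assumes sets_m: "sets m = sets borel" and sets_mu: "sets \<mu> = sets borel" and p: "0 < p"
    and N: "N \<in> sets borel" "emeasure m N = 0"
    and G: "G \<in> borel_measurable borel" "(\<integral>\<^sup>+x. enn_powr (G x) p \<partial>m) \<noteq> \<infinity>"
    and \<Gamma>: "\<And>P. P \<in> \<Gamma> \<Longrightarrow> pimage P \<in> sets borel"
      "\<And>P. P \<in> \<Gamma> \<Longrightarrow> 0 < emeasure \<mu> (pimage P \<inter> N) \<or> path_int \<mu> P G = \<infinity>"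
  shows "Mod \<mu> m p \<Gamma> = 0"
proof -
  obtain X where X: "(\<integral>\<^sup>+x. enn_powr (G x) p \<partial>m) = ennreal X" "0 \<le> X"
    using G(2) by (cases "\<integral>\<^sup>+x. enn_powr (G x) p \<partial>m") auto
  have N_null: "N \<in> null_sets m"
    using N sets_m by (auto simp: null_sets_def)
  have Mod_le: "Mod \<mu> m p \<Gamma> \<le> ennreal (c powr p * X)" if c: "0 < c" for c
  proof -
    define T where "T x = (if x \<in> N then \<infinity> else ennreal c * G x)" for x
    have "Mod \<mu> m p \<Gamma> \<le> (\<integral>\<^sup>+x. enn_powr (T x) p \<partial>m)"
      unfolding T_def using N G \<Gamma> c
      by (intro Mod_le_nn_integral) (auto simp: path_int_infinite_if_null_or_infinite[OF sets_mu])
    also have "\<dots> = (\<integral>\<^sup>+x. ennreal (c powr p) * enn_powr (G x) p \<partial>m)"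
      using AE_not_in[OF N_null] c p
      by (intro nn_integral_cong_AE) (auto simp: T_def enn_powr_mult_ennreal elim: eventually_mono)
    also have "\<dots> = ennreal (c powr p * X)"
      using G(1) X c sets_m by (subst nn_integral_cmult) (auto simp: ennreal_mult)
    finally show ?thesis .
  qed
  have "Mod \<mu> m p \<Gamma> \<le> 0 + ennreal e" if e: "0 < e" for e
  proof -
    define c where "c = (e / (X + 1)) powr (1 / p)"
    have "c powr p = e / (X + 1)"
      unfolding c_def using e X p by (simp add: powr_powr)
    have "c powr p * X \<le> c powr p * (X + 1)"
      by (simp add: mult_left_mono)
    also have "\<dots> = e"
      using \<open>c powr p = e / (X + 1)\<close> X by simp
    finally have "c powr p * X \<le> e" .
    then show ?thesis
      using Mod_le[of c] e X by (simp add: c_def order_trans ennreal_leI)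
  qed
  then have "Mod \<mu> m p \<Gamma> \<le> 0"
    by (rule ennreal_le_epsilon)
  then show ?thesis
    by simp
qed

lemma hajlasz_inequality_diff:
  assumes "\<And>x y. x \<notin> E1 \<Longrightarrow> y \<notin> E1 \<Longrightarrow> \<bar>f1 x - f1 y\<bar> \<le> dist x y powr \<beta> * (g1 x + g1 y)"
    and "\<And>x y. x \<notin> E2 \<Longrightarrow> y \<notin> E2 \<Longrightarrow> \<bar>f2 x - f2 y\<bar> \<le> dist x y powr \<beta> * (g2 x + g2 y)"
    and "x \<notin> E1 \<union> E2" "y \<notin> E1 \<union> E2"
  shows "\<bar>(f1 x - f2 x) - (f1 y - f2 y)\<bar> \<le> dist x y powr \<beta> * ((g1 x + g2 x) + (g1 y + g2 y))"
proof -
  have "\<bar>(f1 x - f2 x) - (f1 y - f2 y)\<bar> \<le> \<bar>f1 x - f1 y\<bar> + \<bar>f2 x - f2 y\<bar>"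
    by linarith
  also have "\<dots> \<le> dist x y powr \<beta> * (g1 x + g1 y) + dist x y powr \<beta> * (g2 x + g2 y)"
    using assms by (intro add_mono) auto
  finally show ?thesis
    by (simp add: algebra_simps)
qed

lemma lp_enorm_le_M_norm: "lp_enorm m p (\<lambda>x. ennreal \<bar>f x\<bar>) \<le> M_norm m \<beta> p f"
  unfolding M_norm_def by (simp add: add_increasing2)

lemma exists_hajlasz_gradient_less:
  assumes "M_norm m \<beta> p f < c"
  obtains g where "hajlasz_gradient m \<beta> p f g" "lp_enorm m p (\<lambda>x. ennreal (g x)) < c"
proof -
  have "(INF g\<in>{g. hajlasz_gradient m \<beta> p f g}. lp_enorm m p (\<lambda>x. ennreal (g x))) < c"
    using assms unfolding M_norm_def by (rule le_less_trans[rotated]) (simp add: add_increasing)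
  then show ?thesis
    using that by (auto simp: INF_less_iff)
qed

lemma M_norm_less_top:
  assumes "f \<in> Hajlasz m \<beta> p"
  shows "M_norm m \<beta> p f < \<infinity>"
proof -
  obtain g where g: "hajlasz_gradient m \<beta> p f g"
    using assms by (auto simp: Hajlasz_def)
  then have "(INF g\<in>{g. hajlasz_gradient m \<beta> p f g}. lp_enorm m p (\<lambda>x. ennreal (g x))) \<le>
      lp_enorm m p (\<lambda>x. ennreal (g x))"
    by (intro INF_lower) simp
  also have "(\<lambda>x. ennreal (g x)) = (\<lambda>x. ennreal \<bar>g x\<bar>)"
    using g by (simp add: hajlasz_gradient_def)
  also have "lp_enorm m p (\<lambda>x. ennreal \<bar>g x\<bar>) < \<infinity>"
    using g unfolding hajlasz_gradient_def in_Lp_def by blast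
  finally show ?thesis
    using assms by (simp add: M_norm_def Hajlasz_def in_Lp_def less_top)
qed

lemma exists_continuous_approximations:
  assumes dense: "continuous_dense_in_Hajlasz m \<beta> p" and f: "f \<in> Hajlasz m \<beta> p"
    and \<epsilon>: "\<And>n. 0 < \<epsilon> n"
  obtains u h where "\<And>n. continuous_on UNIV (u n)" "\<And>n. hajlasz_gradient m \<beta> p (\<lambda>x. f x - u n x) (h n)"
    "\<And>n. lp_enorm m p (\<lambda>x. ennreal \<bar>f x - u n x\<bar>) < ennreal (\<epsilon> n)"
    "\<And>n. lp_enorm m p (\<lambda>x. ennreal (h n x)) < ennreal (\<epsilon> n)"
proof -
  have "\<exists>u h. continuous_on UNIV u \<and> hajlasz_gradient m \<beta> p (\<lambda>x. f x - u x) h \<and>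
      lp_enorm m p (\<lambda>x. ennreal \<bar>f x - u x\<bar>) < ennreal (\<epsilon> n) \<and>
      lp_enorm m p (\<lambda>x. ennreal (h x)) < ennreal (\<epsilon> n)" for n
  proof -
    obtain u where u: "continuous_on UNIV u" "M_norm m \<beta> p (\<lambda>x. f x - u x) < ennreal (\<epsilon> n)"
      using dense f \<epsilon>[of n] unfolding continuous_dense_in_Hajlasz_def by blast
    moreover obtain h where "hajlasz_gradient m \<beta> p (\<lambda>x. f x - u x) h"
      "lp_enorm m p (\<lambda>x. ennreal (h x)) < ennreal (\<epsilon> n)"
      using u(2) by (rule exists_hajlasz_gradient_less)
    ultimately show ?thesis
      using lp_enorm_le_M_norm[of m p "\<lambda>x. f x - u x" \<beta>] by (blast intro: le_less_trans)
  qed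
  then show ?thesis
    using that by metis
qed

lemma hajlasz_gradient_exceptional_sets:
  assumes sets_m: "sets m = sets borel" and h: "\<And>n. hajlasz_gradient m \<beta> p (F n) (h n)"
  shows "\<exists>E. \<forall>n. E n \<in> sets borel \<and> emeasure m (E n) = 0 \<and>
    (\<forall>x y. x \<notin> E n \<longrightarrow> y \<notin> E n \<longrightarrow> \<bar>F n x - F n y\<bar> \<le> dist x y powr \<beta> * (h n x + h n y))"
proof (rule choice, rule allI)
  fix n
  show "\<exists>E. E \<in> sets borel \<and> emeasure m E = 0 \<and>
      (\<forall>x y. x \<notin> E \<longrightarrow> y \<notin> E \<longrightarrow> \<bar>F n x - F n y\<bar> \<le> dist x y powr \<beta> * (h n x + h n y))"
    using h[of n] unfolding hajlasz_gradient_def sets_m by blast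
qed

lemma approximation_majorant:
  fixes f :: "'a \<Rightarrow> real" and u h :: "nat \<Rightarrow> 'a \<Rightarrow> real"
  assumes p: "1 \<le> p" and Mr: "0 \<le> Mr"
    and meas: "f \<in> borel_measurable M" "\<And>n. u n \<in> borel_measurable M" "\<And>n. h n \<in> borel_measurable M"
    and h_nonneg: "\<And>n x. 0 \<le> h n x"
    and lp_diff: "\<And>n. lp_enorm M p (\<lambda>x. ennreal \<bar>f x - u n x\<bar>) \<le> ennreal (Mr / (real (Suc n) * 2 ^ Suc n))"
    and lp_h: "\<And>n. lp_enorm M p (\<lambda>x. ennreal (h n x)) \<le> ennreal (Mr / (real (Suc n) * 2 ^ Suc n))"
  obtains G where "G \<in> borel_measurable M" "(\<integral>\<^sup>+x. enn_powr (G x) p \<partial>M) \<le> ennreal ((2 * Mr) powr p)"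
    "\<And>n x. ennreal (Suc n * h n x) \<le> G x" "\<And>n x. ennreal (Suc n * \<bar>f x - u n x\<bar>) \<le> G x"
proof -
  define \<phi> where "\<phi> n x = ennreal (Suc n * max (h n x) \<bar>f x - u n x\<bar>)" for n x
  have bound: "(\<integral>\<^sup>+x. enn_powr (\<phi> n x) p \<partial>M) \<le> ennreal (Mr powr p * (1 / 2) ^ n)" for n
  proof -
    have "(\<integral>\<^sup>+x. enn_powr (\<phi> n x) p \<partial>M) \<le>
        ennreal (2 * (real (Suc n) * (Mr / (real (Suc n) * 2 ^ Suc n))) powr p)"
      unfolding \<phi>_def using p Mr meas h_nonneg lp_diff lp_h
      by (intro nn_integral_enn_powr_scaled_max_le) auto
    also have "real (Suc n) * (Mr / (real (Suc n) * 2 ^ Suc n)) = Mr / 2 ^ Suc n"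
      by (simp add: divide_simps del: of_nat_Suc)
    also have "2 * (Mr / 2 ^ Suc n) powr p \<le> Mr powr p * (1 / 2) ^ n"
      using powr_divide_power_le[OF p Mr, of "Suc n"] by (simp add: power_one_over field_simps)
    finally show ?thesis
      by (simp add: ennreal_leI order_trans)
  qed
  have sums: "(\<lambda>n. Mr powr p * (1 / 2) ^ n) sums (2 * Mr powr p)"
    using sums_mult[OF geometric_sums[of "1 / 2 :: real"], of "Mr powr p"] by (simp add: mult.commute)
  have \<phi>_meas: "\<phi> n \<in> borel_measurable M" for n
    unfolding \<phi>_def using meas by measurable
  have "0 < p" "0 \<le> Mr powr p * (1 / 2) ^ n" for n
    using p by auto
  then obtain G where G: "G \<in> borel_measurable M" "(\<integral>\<^sup>+x. enn_powr (G x) p \<partial>M) \<le> ennreal (2 * Mr powr p)"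
    "\<And>n x. \<phi> n x \<le> G x"
    using lp_majorant_of_summable[OF _ \<phi>_meas bound _ sums] by metis
  show ?thesis
  proof (rule that)
    show "(\<integral>\<^sup>+x. enn_powr (G x) p \<partial>M) \<le> ennreal ((2 * Mr) powr p)"
      using G(2) two_times_powr_le[OF p Mr] by (meson ennreal_leI order_trans)
    show "ennreal (Suc n * h n x) \<le> G x" "ennreal (Suc n * \<bar>f x - u n x\<bar>) \<le> G x" for n x
      using G(3)[of n x] unfolding \<phi>_def by (auto intro: order_trans[rotated] ennreal_leI mult_left_mono)
  qed (rule G(1))
qed

lemma AE_eq_0_if_M_norm_eq_0:
  assumes sets_m: "sets m = sets borel" and p: "0 < p"
    and f: "f \<in> Hajlasz m \<beta> p" and M: "M_norm m \<beta> p f = 0"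
  shows "AE x in m. 0 = f x"
proof -
  have "lp_enorm m p (\<lambda>x. ennreal \<bar>f x\<bar>) = 0"
    using lp_enorm_le_M_norm[of m p f \<beta>] M by simp
  then have "(\<integral>\<^sup>+x. enn_powr (ennreal \<bar>f x\<bar>) p \<partial>m) = 0"
    using enn_powr_lp_enorm[OF p, of m "\<lambda>x. ennreal \<bar>f x\<bar>"] p by (simp add: enn_powr_zero)
  then have "AE x in m. enn_powr (ennreal \<bar>f x\<bar>) p = 0"
    using f by (subst (asm) nn_integral_0_iff_AE) (auto simp: Hajlasz_def in_Lp_def)
  then show ?thesis
    by eventually_elim (use p in \<open>simp add: enn_powr_ennreal\<close>)
qed

section \<open>Newtonian representatives\<close>

locale newtonian_setting = arc_chord_family \<mu> \<beta> C \<Gamma>s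
  for \<mu> :: "'a::metric_space measure" and \<beta> C \<Gamma>s +
  fixes m :: "'a measure" and p :: real
  assumes sets_m: "sets m = sets borel" and p_ge_1: "1 \<le> p"
begin

lemma measurable_m_eq [simp]: "measurable m N = measurable borel N"
  by (rule measurable_cong_sets[OF sets_m refl])

lemma measurable_mu_eq [simp]: "measurable \<mu> N = measurable borel N"
  by (rule measurable_cong_sets[OF sets_mu refl])

end

text \<open>The weight \<open>n + 1\<close> in the majorant \<open>G\<close> gives \<open>\<integral>\<^sub>\<gamma> h n \<le> (\<integral>\<^sub>\<gamma> G) / (n + 1)\<close>, so the
  \<open>u n\<close> converge uniformly along every path with \<open>\<integral>\<^sub>\<gamma> G < \<infinity>\<close> that meets the exceptional sets
  in a \<open>\<mu>\<close>-null set.\<close>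

locale hajlasz_approximation = newtonian_setting \<mu> \<beta> C \<Gamma>s m p
  for \<mu> :: "'a::metric_space measure" and \<beta> C \<Gamma>s m p +
  fixes f g :: "'a \<Rightarrow> real" and E0 :: "'a set"
    and u h :: "nat \<Rightarrow> 'a \<Rightarrow> real" and E :: "nat \<Rightarrow> 'a set" and G :: "'a \<Rightarrow> ennreal"
  assumes E0: "E0 \<in> sets borel" "emeasure m E0 = 0"
    and f_hajlasz: "\<And>x y. x \<notin> E0 \<Longrightarrow> y \<notin> E0 \<Longrightarrow> \<bar>f x - f y\<bar> \<le> dist x y powr \<beta> * (g x + g y)"
    and g: "g \<in> borel_measurable borel" "\<And>x. 0 \<le> g x"
    and u: "\<And>n. continuous_on UNIV (u n)"
    and h: "\<And>n. h n \<in> borel_measurable borel" "\<And>n x. 0 \<le> h n x"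
    and E: "\<And>n. E n \<in> sets borel" "\<And>n. emeasure m (E n) = 0"
    and diff_hajlasz: "\<And>n x y. x \<notin> E n \<Longrightarrow> y \<notin> E n \<Longrightarrow>
      \<bar>(f x - u n x) - (f y - u n y)\<bar> \<le> dist x y powr \<beta> * (h n x + h n y)"
    and G: "G \<in> borel_measurable borel" "(\<integral>\<^sup>+x. enn_powr (G x) p \<partial>m) \<noteq> \<infinity>"
    and G_ge_h: "\<And>n x. ennreal (Suc n * h n x) \<le> G x"
    and G_ge_diff: "\<And>n x. ennreal (Suc n * \<bar>f x - u n x\<bar>) \<le> G x"
begin

lemma exceptional_set:
  obtains N where "N \<in> sets borel" "emeasure m N = 0" "E0 \<subseteq> N" "\<And>n. E n \<subseteq> N"
    "\<And>x. x \<notin> N \<Longrightarrow> G x \<noteq> \<infinity>"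
proof -
  define N where "N = E0 \<union> (\<Union>n. E n) \<union> {x. G x = \<infinity>}"
  have "AE x in m. enn_powr (G x) p \<noteq> \<infinity>"
    using G by (intro nn_integral_PInf_AE) auto
  then have "AE x in m. x \<notin> {x. G x = \<infinity>}"
    by eventually_elim auto
  moreover have "{x. G x = \<infinity>} \<in> sets m"
    using G(1) by (simp add: sets_m)
  ultimately have "{x. G x = \<infinity>} \<in> null_sets m"
    by (simp add: AE_iff_null_sets)
  moreover have "E0 \<in> null_sets m" "E n \<in> null_sets m" for n
    using E0 E by (auto simp: null_sets_def sets_m)
  ultimately have "N \<in> null_sets m"
    unfolding N_def by (intro null_sets.Un null_sets_UN) auto
  then show ?thesis
    by (intro that[of N]) (auto simp: N_def null_sets_def sets_m)
qed

lemma tendsto_approximations: "G x \<noteq> \<infinity> \<Longrightarrow> (\<lambda>n. u n x) \<longlonglongrightarrow> f x"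
  using G_ge_diff[of _ x]
  by (cases "G x") (auto intro!: LIMSEQ_if_Suc_times_dist_le simp: abs_minus_commute)

lemma path_int_approximation_gradient_le:
  assumes P: "P \<in> \<Gamma>s" and R: "path_int \<mu> P G = ennreal R" "0 \<le> R"
  shows "path_int \<mu> P (\<lambda>x. ennreal (h n x)) \<le> ennreal (R / Suc n)"
proof -
  have "ennreal (Suc n) * path_int \<mu> P (\<lambda>x. ennreal (h n x)) = path_int \<mu> P (\<lambda>x. ennreal (Suc n * h n x))"
    unfolding path_int_def using pimage_in_sets[OF P] h
    by (subst nn_integral_cmult[symmetric]) (auto simp: ennreal_mult mult.assoc)
  also have "\<dots> \<le> path_int \<mu> P G"
    unfolding path_int_def by (intro nn_integral_mono mult_right_mono G_ge_h) simp
  finally have "ennreal (Suc n) * path_int \<mu> P (\<lambda>x. ennreal (h n x)) \<le> ennreal R"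
    unfolding R .
  then show ?thesis
    using R(2) by (cases "path_int \<mu> P (\<lambda>x. ennreal (h n x))")
      (auto simp: ennreal_mult[symmetric] ennreal_mult_top pos_le_divide_eq mult.commute top_unique
        intro!: ennreal_leI simp del: of_nat_Suc)
qed

lemma approximation_hajlasz_inequality:
  "x \<notin> E0 \<union> E n \<Longrightarrow> y \<notin> E0 \<union> E n \<Longrightarrow>
    \<bar>u n x - u n y\<bar> \<le> dist x y powr \<beta> * ((g x + h n x) + (g y + h n y))"
  using hajlasz_inequality_diff[of E0 f \<beta> g "E n" "\<lambda>x. f x - u n x" "h n" x y] f_hajlasz diff_hajlasz
  by simp

lemma approximation_diff_hajlasz_inequality:
  "x \<notin> E k \<union> E n \<Longrightarrow> y \<notin> E k \<union> E n \<Longrightarrow>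
    \<bar>(u n x - u k x) - (u n y - u k y)\<bar> \<le> dist x y powr \<beta> * ((h k x + h n x) + (h k y + h n y))"
  using hajlasz_inequality_diff[of "E k" "\<lambda>x. f x - u k x" \<beta> "h k" "E n" "\<lambda>x. f x - u n x" "h n" x y]
    diff_hajlasz
  by simp

context
  fixes a b :: real and \<gamma> :: "real \<Rightarrow> 'a" and D :: "'a set"
  assumes P: "(a, b, \<gamma>) \<in> \<Gamma>s"
    and D: "D \<in> sets borel" "emeasure \<mu> (\<gamma> ` {a..b} \<inter> D) = 0" "E0 \<subseteq> D" "\<And>n. E n \<subseteq> D"
begin

lemma null_on_path: "D' \<in> sets borel \<Longrightarrow> D' \<subseteq> D \<Longrightarrow> emeasure \<mu> (\<gamma> ` {a..b} \<inter> D') = 0"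
  using emeasure_mono[of "\<gamma> ` {a..b} \<inter> D'" "\<gamma> ` {a..b} \<inter> D" \<mu>] pimage_in_sets[OF P] D
  by (auto simp: sets_mu)

lemma approximation_increment_on_path:
  "ennreal \<bar>u n (\<gamma> a) - u n (\<gamma> b)\<bar> \<le> path_int \<mu> (a, b, \<gamma>) (\<lambda>x. ennreal (9 * C) * (ennreal (g x) + G x))"
proof -
  have "a \<le> b"
    using P Gamma_subset by (auto simp: Gamma_mu_def)
  then have "ennreal \<bar>u n (\<gamma> a) - u n (\<gamma> b)\<bar> \<le>
      ennreal (9 * C) * path_int \<mu> (a, b, \<gamma>) (\<lambda>x. ennreal (g x + h n x))"
    using u g h E0 E D
    by (intro path_increment_bound[OF P, where D = "E0 \<union> E n"] null_on_path
        approximation_hajlasz_inequality) auto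
  also have "\<dots> \<le> ennreal (9 * C) * path_int \<mu> (a, b, \<gamma>) (\<lambda>x. ennreal (g x) + G x)"
  proof (unfold path_int_def, intro mult_left_mono nn_integral_mono mult_right_mono)
    fix x
    have "ennreal (h n x) \<le> ennreal (Suc n * h n x)"
      using h(2)[of n x] by (intro ennreal_leI) (simp add: mult_le_cancel_right1)
    then have "ennreal (h n x) \<le> G x"
      using G_ge_h[of n x] by (rule order_trans)
    then show "ennreal (g x + h n x) \<le> ennreal (g x) + G x"
      using g(2)[of x] h(2)[of n x] by (simp add: ennreal_plus add_left_mono)
  qed auto
  also have "\<dots> = path_int \<mu> (a, b, \<gamma>) (\<lambda>x. ennreal (9 * C) * (ennreal (g x) + G x))"
    unfolding path_int_def using pimage_in_sets[OF P] g G
    by (subst nn_integral_cmult[symmetric]) (auto simp: mult.assoc)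
  finally show ?thesis .
qed

lemma approximation_Cauchy_on_path:
  assumes "s \<in> {a..b}" "t \<in> {a..b}"
  shows "ennreal \<bar>(u n (\<gamma> s) - u k (\<gamma> s)) - (u n (\<gamma> t) - u k (\<gamma> t))\<bar> \<le>
    ennreal (9 * C) * (path_int \<mu> (a, b, \<gamma>) (\<lambda>x. ennreal (h k x)) + path_int \<mu> (a, b, \<gamma>) (\<lambda>x. ennreal (h n x)))"
proof -
  have "ennreal \<bar>(u n (\<gamma> s) - u k (\<gamma> s)) - (u n (\<gamma> t) - u k (\<gamma> t))\<bar> \<le>
      ennreal (9 * C) * path_int \<mu> (a, b, \<gamma>) (\<lambda>x. ennreal (h k x + h n x))"
    using assms u h E D
    by (intro path_increment_bound[OF P, where D = "E k \<union> E n"] null_on_path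
        approximation_diff_hajlasz_inequality continuous_intros) auto
  also have "path_int \<mu> (a, b, \<gamma>) (\<lambda>x. ennreal (h k x + h n x)) =
      path_int \<mu> (a, b, \<gamma>) (\<lambda>x. ennreal (h k x)) + path_int \<mu> (a, b, \<gamma>) (\<lambda>x. ennreal (h n x))"
    unfolding path_int_def using pimage_in_sets[OF P] h
    by (subst nn_integral_add[symmetric]) (auto simp: distrib_right intro!: nn_integral_cong)
  finally show ?thesis .
qed

lemma approximation_increments_le:
  assumes R: "path_int \<mu> (a, b, \<gamma>) G = ennreal R" "0 \<le> R" and st: "s \<in> {a..b}" "t \<in> {a..b}"
  shows "\<bar>(u n (\<gamma> s) - u k (\<gamma> s)) - (u n (\<gamma> t) - u k (\<gamma> t))\<bar> \<le> 9 * C * R / Suc n + 9 * C * R / Suc k"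
proof -
  have "ennreal \<bar>(u n (\<gamma> s) - u k (\<gamma> s)) - (u n (\<gamma> t) - u k (\<gamma> t))\<bar> \<le>
      ennreal (9 * C) * (path_int \<mu> (a, b, \<gamma>) (\<lambda>x. ennreal (h k x)) + path_int \<mu> (a, b, \<gamma>) (\<lambda>x. ennreal (h n x)))"
    by (rule approximation_Cauchy_on_path[OF st])
  also have "\<dots> \<le> ennreal (9 * C) * (ennreal (R / Suc k) + ennreal (R / Suc n))"
    by (intro mult_left_mono add_mono path_int_approximation_gradient_le[OF P R]) auto
  also have "\<dots> = ennreal (9 * C * (R / Suc k + R / Suc n))"
    using C_pos R(2) by (simp add: ennreal_mult ennreal_plus)
  also have "9 * C * (R / Suc k + R / Suc n) = 9 * C * R / Suc n + 9 * C * R / Suc k"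
    by (simp add: field_simps)
  finally show ?thesis
    by (rule ennreal_le_iff[THEN iffD1, rotated]) (use C_pos R(2) in simp)
qed

lemma limit_increment_on_path:
  assumes G_path: "path_int \<mu> (a, b, \<gamma>) G \<noteq> \<infinity>" and G_finite: "\<And>x. x \<notin> D \<Longrightarrow> G x \<noteq> \<infinity>"
  shows "ennreal \<bar>lim (\<lambda>n. u n (\<gamma> a)) - lim (\<lambda>n. u n (\<gamma> b))\<bar> \<le>
    path_int \<mu> (a, b, \<gamma>) (\<lambda>x. ennreal (9 * C) * (ennreal (g x) + G x))"
proof -
  interpret arc_chord_path \<mu> \<beta> C a b \<gamma>
    by (rule arc_chord_path_if_mem[OF P])
  obtain R where R: "path_int \<mu> (a, b, \<gamma>) G = ennreal R" "0 \<le> R"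
    using G_path by (cases "path_int \<mu> (a, b, \<gamma>) G") auto
  define B where "B = 9 * C * R"
  have "\<exists>t0\<in>{a..b}. \<gamma> t0 \<notin> D"
  proof (rule ccontr)
    assume "\<not> (\<exists>t0\<in>{a..b}. \<gamma> t0 \<notin> D)"
    then have "\<gamma> ` {a..b} \<inter> D = \<gamma> ` {a..b}"
      by blast
    then show False
      using D(2) emeasure_image_pos[of a b] a_less_b by simp
  qed
  then obtain t0 where t0: "t0 \<in> {a..b}" "\<gamma> t0 \<notin> D"
    by blast
  have "(\<lambda>n. u n (\<gamma> t)) \<longlonglongrightarrow> lim (\<lambda>n. u n (\<gamma> t))" if "t \<in> {a..b}" for t
  proof -
    have "convergent (\<lambda>n. u n (\<gamma> t0))"
      using tendsto_approximations[OF G_finite[OF t0(2)]] by (rule convergentI)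
    moreover have "\<bar>(u n (\<gamma> t) - u n (\<gamma> t0)) - (u k (\<gamma> t) - u k (\<gamma> t0))\<bar> \<le> B / Suc n + B / Suc k" for n k
      using approximation_increments_le[OF R that t0(1), of n k] by (simp add: B_def algebra_simps)
    ultimately have "convergent (\<lambda>n. u n (\<gamma> t))"
      by (rule convergent_if_increments_Cauchy)
    then show ?thesis
      by (simp add: convergent_LIMSEQ_iff)
  qed
  then have "(\<lambda>n. \<bar>u n (\<gamma> a) - u n (\<gamma> b)\<bar>) \<longlonglongrightarrow> \<bar>lim (\<lambda>n. u n (\<gamma> a)) - lim (\<lambda>n. u n (\<gamma> b))\<bar>"
    using a_less_b by (intro tendsto_intros) auto
  then show ?thesis
    by (rule ennreal_le_of_tendsto) (rule approximation_increment_on_path)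
qed

end

lemma weak_upper_gradient_limit:
  "weak_upper_gradient \<Gamma>s \<mu> m p (\<lambda>x. lim (\<lambda>n. u n x)) (\<lambda>x. ennreal (9 * C) * (ennreal (g x) + G x))"
proof -
  obtain N where N: "N \<in> sets borel" "emeasure m N = 0" "E0 \<subseteq> N" "\<And>n. E n \<subseteq> N"
    "\<And>x. x \<notin> N \<Longrightarrow> G x \<noteq> \<infinity>"
    using exceptional_set by metis
  define \<Gamma>0 where "\<Gamma>0 = {P \<in> \<Gamma>s. 0 < emeasure \<mu> (pimage P \<inter> N) \<or> path_int \<mu> P G = \<infinity>}"
  have "Mod \<mu> m p \<Gamma>0 = 0"
    using p_ge_1 N G
    by (intro Mod_eq_0_if_null_or_infinite[OF sets_m sets_mu]) (auto simp: \<Gamma>0_def pimage_in_sets)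
  moreover have "ennreal \<bar>lim (\<lambda>n. u n (\<gamma> a)) - lim (\<lambda>n. u n (\<gamma> b))\<bar> \<le>
      path_int \<mu> (a, b, \<gamma>) (\<lambda>x. ennreal (9 * C) * (ennreal (g x) + G x))"
    if "(a, b, \<gamma>) \<in> \<Gamma>s - \<Gamma>0" for a b \<gamma>
    using that N by (intro limit_increment_on_path) (auto simp: \<Gamma>0_def)
  ultimately show ?thesis
    unfolding weak_upper_gradient_def using g G by (intro conjI exI[of _ \<Gamma>0]) (auto simp: \<Gamma>0_def)
qed

lemma AE_limit_eq: "AE x in m. lim (\<lambda>n. u n x) = f x"
proof -
  obtain N where N: "N \<in> sets borel" "emeasure m N = 0" "\<And>x. x \<notin> N \<Longrightarrow> G x \<noteq> \<infinity>"
    using exceptional_set by metis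
  then have "N \<in> null_sets m"
    by (auto simp: null_sets_def sets_m)
  then show ?thesis
    by (rule AE_I') (use N(3) tendsto_approximations in \<open>auto intro: limI\<close>)
qed

end

lemma zero_in_Ntilde:
  assumes "0 < p"
  shows "(\<lambda>x. 0) \<in> Ntilde \<Gamma>s \<mu> m p" "N_norm \<Gamma>s \<mu> m p (\<lambda>x. 0) = 0"
proof -
  have wug: "weak_upper_gradient \<Gamma>s \<mu> m p (\<lambda>x. 0) (\<lambda>x. 0)"
    unfolding weak_upper_gradient_def using Mod_empty[OF assms] by (intro conjI exI[of _ "{}"]) auto
  then show "(\<lambda>x. 0) \<in> Ntilde \<Gamma>s \<mu> m p"
    using assms by (auto simp: Ntilde_def in_Lp_def lp_enorm_zero)
  have "N_norm \<Gamma>s \<mu> m p (\<lambda>x. 0) \<le> lp_enorm m p (\<lambda>x. 0) + lp_enorm m p (\<lambda>x. 0)"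
    unfolding N_norm_def using wug by (intro add_mono INF_lower) auto
  then show "N_norm \<Gamma>s \<mu> m p (\<lambda>x. 0) = 0"
    using assms by (simp add: lp_enorm_zero)
qed

context newtonian_setting
begin

lemma Ntilde_and_N_norm_bound:
  assumes f: "in_Lp m p f" and ae: "AE x in m. f' x = f x" and f': "f' \<in> borel_measurable borel"
    and wug: "weak_upper_gradient \<Gamma>s \<mu> m p f' (\<lambda>x. ennreal (9 * C) * (ennreal (g x) + G x))"
    and Mr: "0 \<le> Mr" "lp_enorm m p (\<lambda>x. ennreal \<bar>f x\<bar>) \<le> ennreal Mr"
    and g: "g \<in> borel_measurable borel" "lp_enorm m p (\<lambda>x. ennreal (g x)) \<le> ennreal (2 * Mr)"
    and G: "G \<in> borel_measurable borel" "(\<integral>\<^sup>+x. enn_powr (G x) p \<partial>m) \<le> ennreal ((2 * Mr) powr p)"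
  shows "f' \<in> Ntilde \<Gamma>s \<mu> m p" "N_norm \<Gamma>s \<mu> m p f' \<le> ennreal (72 * C + 1) * ennreal Mr"
proof -
  have p: "0 < p"
    using p_ge_1 by simp
  have lp_f': "lp_enorm m p (\<lambda>x. ennreal \<bar>f' x\<bar>) = lp_enorm m p (\<lambda>x. ennreal \<bar>f x\<bar>)"
    using ae by (intro lp_enorm_cong_AE) (auto elim: eventually_mono)
  have "(\<integral>\<^sup>+x. enn_powr (ennreal (g x)) p \<partial>m) \<le> ennreal ((2 * Mr) powr p)"
    using g Mr p by (intro nn_integral_enn_powr_le_if_lp_enorm_le) auto
  then have "(\<integral>\<^sup>+x. enn_powr (ennreal (9 * C) * (ennreal (g x) + G x)) p \<partial>m) \<le>
      ennreal ((4 * (9 * C) * (2 * Mr)) powr p)"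
    using p_ge_1 C_pos Mr g G by (intro nn_integral_enn_powr_cmult_add_le) auto
  then have lp_\<rho>: "lp_enorm m p (\<lambda>x. ennreal (9 * C) * (ennreal (g x) + G x)) \<le> ennreal (72 * C * Mr)"
    using p C_pos Mr by (intro lp_enorm_le_ennreal) (auto simp: mult_ac)
  then show "f' \<in> Ntilde \<Gamma>s \<mu> m p"
    using f f' wug lp_f' unfolding Ntilde_def in_Lp_def
    by (auto intro!: exI[of _ "\<lambda>x. ennreal (9 * C) * (ennreal (g x) + G x)"] simp: le_less_trans)
  have "N_norm \<Gamma>s \<mu> m p f' \<le>
      lp_enorm m p (\<lambda>x. ennreal \<bar>f x\<bar>) + lp_enorm m p (\<lambda>x. ennreal (9 * C) * (ennreal (g x) + G x))"
    unfolding N_norm_def lp_f' using wug by (intro add_left_mono INF_lower) auto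
  also have "\<dots> \<le> ennreal Mr + ennreal (72 * C * Mr)"
    using Mr(2) lp_\<rho> by (rule add_mono)
  also have "\<dots> = ennreal ((72 * C + 1) * Mr)"
    using C_pos Mr(1) by (subst ennreal_plus[symmetric]) (auto simp: algebra_simps)
  also have "\<dots> = ennreal (72 * C + 1) * ennreal Mr"
    using C_pos Mr(1) by (intro ennreal_mult) auto
  finally show "N_norm \<Gamma>s \<mu> m p f' \<le> ennreal (72 * C + 1) * ennreal Mr" .
qed

lemma exists_hajlasz_approximation:
  assumes dense: "continuous_dense_in_Hajlasz m \<beta> p" and f: "f \<in> Hajlasz m \<beta> p"
    and Mr: "M_norm m \<beta> p f = ennreal Mr" "0 < Mr"
  obtains g E0 u h E G where "hajlasz_approximation \<mu> \<beta> C \<Gamma>s m p f g E0 u h E G"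
    "lp_enorm m p (\<lambda>x. ennreal (g x)) \<le> ennreal (2 * Mr)"
    "(\<integral>\<^sup>+x. enn_powr (G x) p \<partial>m) \<le> ennreal ((2 * Mr) powr p)"
proof -
  obtain g where g: "hajlasz_gradient m \<beta> p f g" "lp_enorm m p (\<lambda>x. ennreal (g x)) < ennreal (2 * Mr)"
    using exists_hajlasz_gradient_less[of m \<beta> p f "ennreal (2 * Mr)"] Mr by (auto simp: ennreal_lessI)
  then obtain E0 where E0: "E0 \<in> sets borel" "emeasure m E0 = 0"
    "\<And>x y. x \<notin> E0 \<Longrightarrow> y \<notin> E0 \<Longrightarrow> \<bar>f x - f y\<bar> \<le> dist x y powr \<beta> * (g x + g y)"
    by (auto simp: hajlasz_gradient_def sets_m)
  have \<epsilon>_pos: "0 < Mr / (real (Suc n) * 2 ^ Suc n)" for n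
    using Mr(2) by simp
  obtain u h where u: "\<And>n. continuous_on UNIV (u n)"
    and h: "\<And>n. hajlasz_gradient m \<beta> p (\<lambda>x. f x - u n x) (h n)"
    and lp_u: "\<And>n. lp_enorm m p (\<lambda>x. ennreal \<bar>f x - u n x\<bar>) < ennreal (Mr / (real (Suc n) * 2 ^ Suc n))"
    and lp_h: "\<And>n. lp_enorm m p (\<lambda>x. ennreal (h n x)) < ennreal (Mr / (real (Suc n) * 2 ^ Suc n))"
    using exists_continuous_approximations[where \<epsilon> = "\<lambda>n. Mr / (real (Suc n) * 2 ^ Suc n)", OF dense f \<epsilon>_pos]
    by blast
  from hajlasz_gradient_exceptional_sets[OF sets_m h]
  obtain E where E: "\<forall>n. E n \<in> sets borel \<and> emeasure m (E n) = 0 \<and> (\<forall>x y. x \<notin> E n \<longrightarrow> y \<notin> E n \<longrightarrow>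
      \<bar>(f x - u n x) - (f y - u n y)\<bar> \<le> dist x y powr \<beta> * (h n x + h n y))" ..
  have meas: "f \<in> borel_measurable m" "g \<in> borel_measurable borel" "\<And>x. 0 \<le> g x"
    "\<And>n. u n \<in> borel_measurable m" "\<And>n. h n \<in> borel_measurable m" "\<And>n x. 0 \<le> h n x"
    using f g(1) h u
    by (auto simp: Hajlasz_def hajlasz_gradient_def in_Lp_def borel_measurable_continuous_onI)
  obtain G where G: "G \<in> borel_measurable m" "(\<integral>\<^sup>+x. enn_powr (G x) p \<partial>m) \<le> ennreal ((2 * Mr) powr p)"
    "\<And>n x. ennreal (Suc n * h n x) \<le> G x" "\<And>n x. ennreal (Suc n * \<bar>f x - u n x\<bar>) \<le> G x"
    using approximation_majorant[where f = f and u = u and h = h and M = m and Mr = Mr and p = p,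
        OF p_ge_1 less_imp_le[OF Mr(2)] meas(1,4,5,6) less_imp_le[OF lp_u] less_imp_le[OF lp_h]]
    by blast
  have "(\<integral>\<^sup>+x. enn_powr (G x) p \<partial>m) \<noteq> \<infinity>"
    using G(2) by (auto simp: top_unique)
  then have "hajlasz_approximation \<mu> \<beta> C \<Gamma>s m p f g E0 u h E G"
    using E0 meas u E G by unfold_locales auto
  with g(2) G(2) show ?thesis
    by (intro that) auto
qed

lemma Hajlasz_Newtonian_representative:
  assumes dense: "continuous_dense_in_Hajlasz m \<beta> p" and f: "f \<in> Hajlasz m \<beta> p"
  shows "\<exists>f'. (AE x in m. f' x = f x) \<and> f' \<in> Ntilde \<Gamma>s \<mu> m p \<and>
    N_norm \<Gamma>s \<mu> m p f' \<le> ennreal (72 * C + 1) * M_norm m \<beta> p f"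
proof (cases "M_norm m \<beta> p f = 0")
  case True
  show ?thesis
  proof (intro exI[of _ "\<lambda>x. 0"] conjI)
    show "AE x in m. 0 = f x"
      using AE_eq_0_if_M_norm_eq_0[OF sets_m _ f True] p_ge_1 by simp
    show "(\<lambda>x. 0) \<in> Ntilde \<Gamma>s \<mu> m p" "N_norm \<Gamma>s \<mu> m p (\<lambda>x. 0) \<le> ennreal (72 * C + 1) * M_norm m \<beta> p f"
      using zero_in_Ntilde[of p \<Gamma>s \<mu> m] p_ge_1 by simp_all
  qed
next
  case False
  then obtain Mr where Mr: "M_norm m \<beta> p f = ennreal Mr" "0 < Mr"
    using M_norm_less_top[OF f] by (cases "M_norm m \<beta> p f") (auto simp: ennreal_neq_top)
  then obtain g E0 u h E G where approximation: "hajlasz_approximation \<mu> \<beta> C \<Gamma>s m p f g E0 u h E G"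
    and g: "lp_enorm m p (\<lambda>x. ennreal (g x)) \<le> ennreal (2 * Mr)"
    and G: "(\<integral>\<^sup>+x. enn_powr (G x) p \<partial>m) \<le> ennreal ((2 * Mr) powr p)"
    using exists_hajlasz_approximation[OF dense f] by blast
  interpret approximation: hajlasz_approximation \<mu> \<beta> C \<Gamma>s m p f g E0 u h E G
    by (rule approximation)
  have "(\<lambda>x. lim (\<lambda>n. u n x)) \<in> borel_measurable borel"
    using approximation.u by (intro borel_measurable_lim_metric borel_measurable_continuous_onI)
  moreover have "in_Lp m p f" "lp_enorm m p (\<lambda>x. ennreal \<bar>f x\<bar>) \<le> ennreal Mr"
    using f lp_enorm_le_M_norm[of m p f \<beta>] Mr(1) by (simp_all add: Hajlasz_def)
  ultimately have "(\<lambda>x. lim (\<lambda>n. u n x)) \<in> Ntilde \<Gamma>s \<mu> m p"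
    "N_norm \<Gamma>s \<mu> m p (\<lambda>x. lim (\<lambda>n. u n x)) \<le> ennreal (72 * C + 1) * ennreal Mr"
    using Ntilde_and_N_norm_bound[OF _ approximation.AE_limit_eq _ approximation.weak_upper_gradient_limit
        less_imp_le[OF Mr(2)] _ approximation.g(1) g approximation.G(1) G]
    by blast+
  then show ?thesis
    using approximation.AE_limit_eq Mr(1) by auto
qed

end

theorem corollary5p6:
  fixes \<mu> m :: "'a::metric_space measure" and p \<beta> :: real and \<Gamma>s :: "'a rpath set"
  assumes "sets \<mu> = sets borel" and "\<forall>x. emeasure \<mu> {x} = 0"
    and "sets m = sets borel"
    and "1 \<le> p" and "0 < \<beta>"
    and "\<Gamma>s \<subseteq> Gamma_mu \<mu>" and "subpath_closed \<Gamma>s" and "joins_points \<Gamma>s"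
    and "arc_chord \<mu> \<beta> \<Gamma>s"
    and "continuous_dense_in_Hajlasz m \<beta> p"
  shows "\<exists>C>0. \<forall>f \<in> Hajlasz m \<beta> p. \<exists>f'. (AE x in m. f' x = f x) \<and>
           f' \<in> Ntilde \<Gamma>s \<mu> m p \<and> N_norm \<Gamma>s \<mu> m p f' \<le> ennreal C * M_norm m \<beta> p f"
proof -
  obtain C where C: "0 < C"
    "\<forall>P\<in>\<Gamma>s. ennreal (diameter (pimage P) powr \<beta>) \<le> ennreal C * emeasure \<mu> (pimage P)"
    using assms(9) unfolding arc_chord_def by blast
  interpret newtonian_setting \<mu> \<beta> C \<Gamma>s m p
    using assms C by unfold_locales auto
  show ?thesis
    using Hajlasz_Newtonian_representative[OF assms(10)] C(1) by (intro exI[of _ "72 * C + 1"]) auto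
qed

end
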